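(* Let $N$ be a positive integer and let $S\subseteq[0,1]$ be measurable. For $n\in\{1,\dots,N\}$ let $$A_n=\Big\{t\in[0,\tfrac1N]:\ t+\tfrac jN\in S\text{ for exactly } n \text{ values of } j\in\{0,\dots,N-1\}\Big\},\qquad A_{\ge n}=\bigcup_{k=n}^N A_k .$$ Suppose there exist sets $\Lambda_1,\dots,\Lambda_N\subseteq N\mathbb{Z}$ such that for each $n$ the system $E(\Lambda_n)$ is a Riesz basis of $L^2(A_{\ge n})$. Then, with $\Lambda=\bigcup_{j=1}^N(\Lambda_j+j)$, the system $E(\Lambda)$ is a Riesz basis of $L^2(S)$.
   Context: For real $\lambda$, $e_\lambda(t)=e^{2\pi i\lambda t}$, and $E(\Lambda)=\{e_\lambda\}_{\lambda\in\Lambda}$. A Riesz basis of a Hilbert space $H$ is the image of an orthonormal basis under a bounded invertible operator. Equivalently, it is a complete system $\{f_n\}$ with $c\sum|a_n|^2\le\|\sum a_nf_n\|^2\le C\sum|a_n|^2$ for all $\{a_n\}\in\ell^2$, for some constants $0<c\le C$. If $A_{\ge n}$ has measure zero, $L^2(A_{\ge n})=\{0\}$ and the empty system counts as a Riesz basis of it. *)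

theory Defs
  imports "HOL-Analysis.Analysis"
begin

definition expo :: "real \<Rightarrow> real \<Rightarrow> complex" where
  "expo lam t = exp (2 * of_real pi * \<i> * of_real (lam * t))"

definition in_L2 :: "real set \<Rightarrow> (real \<Rightarrow> complex) \<Rightarrow> bool" where
  "in_L2 A f \<longleftrightarrow> (\<lambda>t. indicator A t *\<^sub>R f t) \<in> borel_measurable lebesgue
      \<and> integrable lebesgue (\<lambda>t. indicator A t * (cmod (f t))\<^sup>2)"

definition L2_norm_sq :: "real set \<Rightarrow> (real \<Rightarrow> complex) \<Rightarrow> real" where
  "L2_norm_sq A f = (LINT t|lebesgue. indicator A t * (cmod (f t))\<^sup>2)"

text \<open>E(Lambda) is a Riesz basis of L^2(A): it is complete (finite linear combinations
  are dense in L^2(A)) and satisfies the two-sided Riesz inequality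
  c * sum |a|^2 <= ||sum a_lam e_lam||^2 <= C * sum |a|^2 (stated for finitely supported
  coefficient sequences, which is equivalent to the ell^2 version by density).\<close>
definition riesz_basis_exp :: "real set \<Rightarrow> real set \<Rightarrow> bool" where
  "riesz_basis_exp A Lam \<longleftrightarrow>
     (\<forall>f. in_L2 A f \<longrightarrow> (\<forall>\<epsilon>>0. \<exists>F a. finite F \<and> F \<subseteq> Lam \<and>
          L2_norm_sq A (\<lambda>t. f t - (\<Sum>lam\<in>F. a lam * expo lam t)) < \<epsilon>))
   \<and> (\<exists>c C. 0 < c \<and> c \<le> C \<and>
        (\<forall>F a. finite F \<longrightarrow> F \<subseteq> Lam \<longrightarrow>
           c * (\<Sum>lam\<in>F. (cmod (a lam))\<^sup>2) \<le> L2_norm_sq A (\<lambda>t. \<Sum>lam\<in>F. a lam * expo lam t)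
         \<and> L2_norm_sq A (\<lambda>t. \<Sum>lam\<in>F. a lam * expo lam t) \<le> C * (\<Sum>lam\<in>F. (cmod (a lam))\<^sup>2)))"

definition A_set :: "nat \<Rightarrow> real set \<Rightarrow> nat \<Rightarrow> real set" where
  "A_set N S n = {t \<in> {0..1 / real N}. card {j \<in> {0..<N}. t + real j / real N \<in> S} = n}"

definition A_ge :: "nat \<Rightarrow> real set \<Rightarrow> nat \<Rightarrow> real set" where
  "A_ge N S n = (\<Union>k\<in>{n..N}. A_set N S k)"

end

theory Submission
  imports Defs "HOL-Computational_Algebra.Polynomial"
begin

(*
  Fold [0, 1] onto [0, 1/N]: over t the set S has the fibre J(t) = {m < N. t + m/N \<in> S}, and
  t \<in> A_k iff card J(t) = k. A frequency l \<in> Lam j + j satisfies e_l(t + m/N) = w^(m j) e_l(t) with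
  w = exp(2 pi i / N). Hence on the fibre a trigonometric polynomial with frequencies in Lambda reads
  (\<Sum>j. w^(m j) V_j(t)), where V_j collects its frequencies in the j-th layer Lam j + j, and for
  t \<in> A_k inverting the k x k Vandermonde matrix (w^(m j)) recovers V_1(t), ..., V_k(t) from the
  values on the fibre, up to the layers above k.
  The lower Riesz bound then follows by downward induction on j from the lower bound for
  E(Lam j) on A_{>=j}; the upper bound is Parseval on [0, 1], as Lambda consists of integers.
  Completeness: approximate, layer by layer from the bottom, the j-th Vandermonde coefficient of a
  function on A_{>=j} by exponentials from Lam j; the errors control the L^2(S) error.
*)

section \<open>Lagrange interpolation and the inverse Vandermonde matrix\<close>

definition lagrange_basis :: "('i \<Rightarrow> 'a::field) \<Rightarrow> 'i set \<Rightarrow> 'i \<Rightarrow> 'a poly" where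
  "lagrange_basis x J m = smult (1 / (\<Prod>m'\<in>J-{m}. (x m - x m'))) (\<Prod>m'\<in>J-{m}. [:- x m', 1:])"

lemma poly_lagrange_basis:
  assumes "finite J" "inj_on x J" "m \<in> J" "m' \<in> J"
  shows "poly (lagrange_basis x J m) (x m') = (if m' = m then 1 else 0)"
proof (cases "m' = m")
  case True
  have "(\<Prod>m''\<in>J-{m}. (x m - x m'')) \<noteq> 0"
    using assms by (auto simp: inj_on_def)
  then show ?thesis using True by (simp add: lagrange_basis_def poly_prod)
next
  case False
  have "(\<Prod>m''\<in>J-{m}. poly [:- x m'', 1:] (x m')) = 0"
    using assms False by (intro prod_zero) (auto intro!: bexI[of _ m'])
  then show ?thesis using False by (simp add: lagrange_basis_def poly_prod)
qed

lemma degree_lagrange_basis_less: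
  assumes "finite J" "m \<in> J"
  shows "degree (lagrange_basis x J m) < card J"
proof -
  have "degree (\<Prod>m'\<in>J-{m}. [:- x m', 1:]) \<le> (\<Sum>m'\<in>J-{m}. degree [:- x m', 1:])"
    using degree_prod_sum_le[of "J-{m}" "\<lambda>m'. [:- x m', 1:]"] assms by (simp add: o_def)
  also have "\<dots> = card (J - {m})" by simp
  also have "\<dots> < card J" using assms by (metis card_Diff1_less)
  finally show ?thesis unfolding lagrange_basis_def
    by (meson degree_smult_le le_less_trans)
qed

lemma lagrange_interpolation:
  assumes "finite J" "inj_on x J" "degree p < card J"
  shows "p = (\<Sum>m\<in>J. smult (poly p (x m)) (lagrange_basis x J m))"
proof (rule poly_eqI_degree[where A="x ` J"])
  fix z assume "z \<in> x ` J"
  then obtain m' where m': "m' \<in> J" "z = x m'" by auto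
  have "poly (\<Sum>m\<in>J. smult (poly p (x m)) (lagrange_basis x J m)) z
      = (\<Sum>m\<in>J. poly p (x m) * poly (lagrange_basis x J m) (x m'))"
    by (simp add: poly_sum m')
  also have "\<dots> = (\<Sum>m\<in>J. if m = m' then poly p (x m) else 0)"
    using assms m' by (intro sum.cong) (auto simp: poly_lagrange_basis)
  also have "\<dots> = poly p z" using m' assms by simp
  finally show "poly p z = poly (\<Sum>m\<in>J. smult (poly p (x m)) (lagrange_basis x J m)) z" by simp
next
  show "degree p < card (x ` J)" using assms by (simp add: card_image)
  have "degree (\<Sum>m\<in>J. smult (poly p (x m)) (lagrange_basis x J m)) \<le> card J - 1"
  proof (rule degree_sum_le)
    fix m assume "m \<in> J"
    then show "degree (smult (poly p (x m)) (lagrange_basis x J m)) \<le> card J - 1"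
      using degree_lagrange_basis_less[OF assms(1), of m x] degree_smult_le
      by (metis Suc_pred' bot_nat_0.not_eq_extremum degree_smult_eq less_Suc_eq_le less_nat_zero_code)
  qed (use assms in auto)
  then show "degree (\<Sum>m\<in>J. smult (poly p (x m)) (lagrange_basis x J m)) < card (x ` J)"
    using assms by (simp add: card_image)
qed

lemma poly_altdef_less:
  fixes z :: "'a::{comm_semiring_0,semiring_1}"
  assumes "degree p < k"
  shows "poly p z = (\<Sum>i<k. coeff p i * z ^ i)"
proof -
  have "poly p z = (\<Sum>i\<le>degree p. coeff p i * z ^ i)" by (rule poly_altdef)
  also have "\<dots> = (\<Sum>i<k. coeff p i * z ^ i)"
    using assms by (intro sum.mono_neutral_left) (auto simp: coeff_eq_0)
  finally show ?thesis .
qed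

text \<open>The inverse of the Vandermonde matrix \<open>(x m ^ j)\<close>, \<open>m \<in> J\<close>, \<open>1 \<le> j \<le> card J\<close>,
  read off from the coefficients of the Lagrange basis.\<close>
definition vandermonde_inv :: "('i \<Rightarrow> 'a::field) \<Rightarrow> 'i set \<Rightarrow> nat \<Rightarrow> 'i \<Rightarrow> 'a" where
  "vandermonde_inv x J j m = coeff (lagrange_basis x J m) (j - 1) / x m"

lemma vandermonde_mult_inv:
  assumes "finite J" "inj_on x J" "m \<in> J" "m' \<in> J" "\<And>m. m \<in> J \<Longrightarrow> x m \<noteq> 0"
  shows "(\<Sum>j\<in>{1..card J}. x m' ^ j * vandermonde_inv x J j m) = (if m = m' then 1 else 0)"
proof -
  have "(\<Sum>j\<in>{1..card J}. x m' ^ j * vandermonde_inv x J j m)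
      = (\<Sum>i<card J. x m' ^ Suc i * vandermonde_inv x J (Suc i) m)"
    by (rule sum.reindex_bij_witness[where i=Suc and j="\<lambda>j. j - 1"]) auto
  also have "\<dots> = x m' / x m * (\<Sum>i<card J. coeff (lagrange_basis x J m) i * x m' ^ i)"
    by (simp add: vandermonde_inv_def sum_distrib_left mult_ac)
  also have "\<dots> = x m' / x m * poly (lagrange_basis x J m) (x m')"
    using poly_altdef_less[OF degree_lagrange_basis_less[OF assms(1,3)], of x "x m'"] by simp
  also have "\<dots> = (if m = m' then 1 else 0)"
    using assms by (auto simp: poly_lagrange_basis)
  finally show ?thesis .
qed

lemma inv_mult_vandermonde:
  fixes x :: "'i \<Rightarrow> 'a::field"
  assumes "finite J" "inj_on x J" "j \<in> {1..card J}" "j' \<in> {1..card J}"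
    and "\<And>m. m \<in> J \<Longrightarrow> x m \<noteq> 0"
  shows "(\<Sum>m\<in>J. vandermonde_inv x J j m * x m ^ j') = (if j = j' then 1 else 0)"
proof -
  define p :: "'a poly" where "p = monom 1 (j' - 1)"
  have deg_p: "degree p < card J"
    using assms(4) unfolding p_def degree_monom_eq[OF one_neq_zero] by auto
  have "(\<Sum>m\<in>J. vandermonde_inv x J j m * x m ^ j')
      = (\<Sum>m\<in>J. coeff (smult (poly p (x m)) (lagrange_basis x J m)) (j - 1))"
  proof (intro sum.cong refl)
    fix m assume m: "m \<in> J"
    have "x m ^ j' = x m * x m ^ (j' - 1)" using assms(4)
      by (metis One_nat_def Suc_pred atLeastAtMost_iff less_eq_Suc_le power_Suc)
    then show "vandermonde_inv x J j m * x m ^ j' = coeff (smult (poly p (x m)) (lagrange_basis x J m)) (j - 1)"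
      using assms(5)[OF m] by (simp add: vandermonde_inv_def p_def poly_monom)
  qed
  also have "\<dots> = coeff (\<Sum>m\<in>J. smult (poly p (x m)) (lagrange_basis x J m)) (j - 1)"
    by (simp add: coeff_sum)
  also have "\<dots> = coeff p (j - 1)" using lagrange_interpolation[OF assms(1,2) deg_p] by simp
  also have "\<dots> = (if j = j' then 1 else 0)" using assms by (auto simp: p_def coeff_monom)
  finally show ?thesis .
qed

section \<open>Exponentials and Parseval's identity\<close>

lemma sum_square_le_card_mult:
  fixes f :: "'a \<Rightarrow> real"
  shows "(\<Sum>i\<in>I. f i)\<^sup>2 \<le> card I * (\<Sum>i\<in>I. (f i)\<^sup>2)"
  using Cauchy_Schwarz_ineq_sum[of "\<lambda>_. 1" f I] by (simp add: mult.commute)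

lemma norm_diff_square_le:
  fixes x y :: "'a::real_normed_vector"
  shows "(norm (x - y))\<^sup>2 \<le> 2 * (norm x)\<^sup>2 + 2 * (norm y)\<^sup>2"
proof -
  have "(norm (x - y))\<^sup>2 \<le> (norm x + norm y)\<^sup>2"
    using norm_triangle_ineq4[of x y] by (intro power_mono) auto
  also have "\<dots> \<le> 2 * (norm x)\<^sup>2 + 2 * (norm y)\<^sup>2"
    using sum_square_le_card_mult[of id "{norm x, norm y}"]
    by (cases "norm x = norm y") (auto simp: power2_eq_square algebra_simps)
  finally show ?thesis .
qed

lemma expo_cis: "expo l t = cis (2 * pi * (l * t))"
  by (simp add: expo_def cis_conv_exp mult_ac)

lemma norm_expo [simp]: "cmod (expo l t) = 1"
  by (simp add: expo_cis)

lemma expo_zero_freq [simp]: "expo 0 t = 1"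
  by (simp add: expo_def)

lemma expo_add_freq: "expo (a + b) t = expo a t * expo b t"
  by (simp add: expo_def distrib_right distrib_left exp_add[symmetric] mult_ac)

lemma expo_add_time: "expo a (s + t) = expo a s * expo a t"
  by (simp add: expo_def distrib_right distrib_left exp_add[symmetric] mult_ac)

lemma expo_mult_cnj: "expo a t * cnj (expo b t) = expo (a - b) t"
  by (simp add: expo_cis cis_cnj cis_mult algebra_simps)

lemma expo_Ints: assumes "l * t \<in> \<int>" shows "expo l t = 1"
proof -
  from assms obtain n where n: "l * t = of_int n" by (auto elim: Ints_cases)
  have "expo l t = cis (2 * pi * of_int n)" by (simp add: expo_cis n)
  also have "\<dots> = 1" by (simp add: complex_eq_iff)
  finally show ?thesis .
qed

lemma expo_power: "expo l t ^ n = expo (real n * l) t"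
  by (simp add: expo_def exp_of_nat_mult[symmetric] mult_ac)

lemma continuous_on_expo [continuous_intros]: "continuous_on A (expo l)"
  unfolding expo_def by (intro continuous_intros)

lemma has_vector_derivative_expo:
  assumes "d \<noteq> 0"
  shows "((\<lambda>t. expo d t / (2 * of_real pi * \<i> * of_real d)) has_vector_derivative expo d t)
    (at t within A)"
proof -
  let ?c = "2 * of_real pi * \<i> * of_real d :: complex"
  have "((\<lambda>z. exp (?c * z) / ?c) has_field_derivative exp (?c * of_real t)) (at (of_real t))"
    using assms by (auto intro!: derivative_eq_intros)
  from has_vector_derivative_real_field[OF this]
  have "((\<lambda>x. exp (?c * of_real x) / ?c) has_vector_derivative exp (?c * of_real t)) (at t within A)" .
  moreover have "\<And>x. exp (?c * of_real x) = expo d x" by (simp add: expo_def mult_ac)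
  ultimately show ?thesis by simp
qed

lemma integral_expo_Icc:
  assumes "P > 0" "d * P \<in> \<int>"
  shows "(LINT t|lborel. indicator {0..P} t *\<^sub>R expo d t) = (if d = 0 then of_real P else 0)"
proof (cases "d = 0")
  case True
  then show ?thesis
    using assms by (simp add: scaleR_conv_of_real integral_complex_of_real[symmetric])
next
  case False
  have "(LINT t|lborel. indicator {0..P} t *\<^sub>R expo d t)
      = expo d P / (2 * of_real pi * \<i> * of_real d) - expo d 0 / (2 * of_real pi * \<i> * of_real d)"
    using assms False
    by (intro integral_FTC_atLeastAtMost has_vector_derivative_expo continuous_on_expo) auto
  also have "\<dots> = 0" using assms by (simp add: expo_Ints mult.commute)
  finally show ?thesis using False by simp
qed

abbreviation trig_poly :: "real set \<Rightarrow> (real \<Rightarrow> complex) \<Rightarrow> real \<Rightarrow> complex" where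
  "trig_poly F a t \<equiv> \<Sum>l\<in>F. a l * expo l t"

lemma norm_trig_poly_le: "cmod (trig_poly F a t) \<le> (\<Sum>l\<in>F. cmod (a l))"
  by (rule order.trans[OF norm_sum]) (simp add: norm_mult)

lemma square_norm_trig_poly_le: "(cmod (trig_poly F a t))\<^sup>2 \<le> (\<Sum>l\<in>F. cmod (a l))\<^sup>2"
  by (intro power_mono norm_trig_poly_le) auto

lemma trig_poly_union:
  assumes "finite F" "finite G" "F \<inter> G = {}"
  shows "trig_poly (F \<union> G) (\<lambda>l. if l \<in> F then a l else b l) t = trig_poly F a t + trig_poly G b t"
proof -
  have "trig_poly G (\<lambda>l. if l \<in> F then a l else b l) t = trig_poly G b t"
    using assms(3) by (intro sum.cong) auto
  then show ?thesis using assms by (simp add: sum.union_disjoint)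
qed

lemma parseval_Icc_lborel:
  assumes "P > 0" "finite F" and sep: "\<And>l m. l \<in> F \<Longrightarrow> m \<in> F \<Longrightarrow> (l - m) * P \<in> \<int>"
  shows "(LINT t|lborel. indicator {0..P} t * (cmod (trig_poly F a t))\<^sup>2) = P * (\<Sum>l\<in>F. (cmod (a l))\<^sup>2)"
proof -
  let ?X = "\<lambda>l m t. (a l * cnj (a m)) * (indicator {0..P} t *\<^sub>R expo (l - m) t)"
  have int: "integrable lborel (?X l m)" for l m
    using borel_integrable_atLeastAtMost'[OF continuous_on_expo]
    by (intro integrable_mult_right) (simp add: set_integrable_def)
  have expand: "complex_of_real (indicator {0..P} t * (cmod (trig_poly F a t))\<^sup>2)
      = (\<Sum>l\<in>F. \<Sum>m\<in>F. ?X l m t)" for t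
  proof -
    have "complex_of_real ((cmod (trig_poly F a t))\<^sup>2) = trig_poly F a t * cnj (trig_poly F a t)"
      by (rule complex_norm_square)
    also have "\<dots> = (\<Sum>l\<in>F. \<Sum>m\<in>F. (a l * cnj (a m)) * (expo l t * cnj (expo m t)))"
      by (simp add: sum_product mult_ac)
    finally show ?thesis
      by (simp add: expo_mult_cnj indicator_def sum_distrib_left mult_ac)
  qed
  have "complex_of_real (LINT t|lborel. indicator {0..P} t * (cmod (trig_poly F a t))\<^sup>2)
      = (LINT t|lborel. (\<Sum>l\<in>F. \<Sum>m\<in>F. ?X l m t))"
    by (simp only: integral_complex_of_real[symmetric] expand)
  also have "\<dots> = (\<Sum>l\<in>F. \<Sum>m\<in>F. (a l * cnj (a m)) * (LINT t|lborel. indicator {0..P} t *\<^sub>R expo (l - m) t))"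
  proof -
    have "(LINT t|lborel. (\<Sum>l\<in>F. \<Sum>m\<in>F. ?X l m t)) = (\<Sum>l\<in>F. \<Sum>m\<in>F. (LINT t|lborel. ?X l m t))"
      by (simp only: Bochner_Integration.integral_sum[OF Bochner_Integration.integrable_sum[OF int]]
          Bochner_Integration.integral_sum[OF int])
    then show ?thesis by (simp only: integral_mult_right_zero)
  qed
  also have "\<dots> = (\<Sum>l\<in>F. a l * cnj (a l) * of_real P)"
    using assms by (simp add: integral_expo_Icc left_diff_distrib if_distrib cong: if_cong)
  also have "\<dots> = complex_of_real (P * (\<Sum>l\<in>F. (cmod (a l))\<^sup>2))"
    by (simp add: complex_norm_square sum_distrib_left mult_ac del: of_real_power)
  finally show ?thesis by (simp only: of_real_eq_iff)
qed

lemma borel_measurable_lebesgue_continuous: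
  fixes f :: "real \<Rightarrow> 'b::euclidean_space"
  assumes "continuous_on UNIV f"
  shows "f \<in> borel_measurable lebesgue"
  using assms by (intro measurable_completion) (simp add: borel_measurable_continuous_onI)

lemma sets_lebesgue_Icc [measurable]: "{a..b::real} \<in> sets lebesgue"
  by simp

lemma borel_measurable_lebesgue_ident [measurable]: "(\<lambda>x::real. x) \<in> borel_measurable lebesgue"
  by (intro borel_measurable_lebesgue_continuous continuous_on_id)

lemma borel_measurable_expo [measurable]: "expo l \<in> borel_measurable lebesgue"
  by (intro borel_measurable_lebesgue_continuous continuous_on_expo)

lemma parseval_Icc:
  assumes "P > 0" "finite F" and "\<And>l m. l \<in> F \<Longrightarrow> m \<in> F \<Longrightarrow> (l - m) * P \<in> \<int>"
  shows "(LINT t|lebesgue. indicator {0..P} t * (cmod (trig_poly F a t))\<^sup>2) = P * (\<Sum>l\<in>F. (cmod (a l))\<^sup>2)"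
proof -
  have "continuous_on UNIV (\<lambda>t. (cmod (trig_poly F a t))\<^sup>2)"
    by (intro continuous_intros)
  then have "(\<lambda>t. indicator {0..P} t * (cmod (trig_poly F a t))\<^sup>2) \<in> borel_measurable borel"
    by (intro borel_measurable_times borel_measurable_continuous_onI borel_measurable_indicator) auto
  then have "(\<lambda>t. indicator {0..P} t * (cmod (trig_poly F a t))\<^sup>2) \<in> borel_measurable lborel"
    by (simp add: measurable_lborel2)
  then show ?thesis using parseval_Icc_lborel[OF assms] by (simp add: integral_completion)
qed

section \<open>Folding \<open>[0, 1]\<close> onto \<open>[0, 1/N]\<close>\<close>

lemma borel_measurable_translate:
  fixes f :: "real \<Rightarrow> 'b::euclidean_space"
  assumes "f \<in> borel_measurable lebesgue"
  shows "(\<lambda>t. f (t + c)) \<in> borel_measurable lebesgue"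
  using borel_measurable_affine[OF assms, of 1 c] by (simp add: add.commute)

lemma sets_lebesgue_translate:
  assumes "S \<in> sets lebesgue"
  shows "{t::real. t + c \<in> S} \<in> sets lebesgue"
proof -
  have "{t::real. t + c \<in> S} = (\<lambda>x. - c + x) ` S" by force
  then show ?thesis by (simp only: lebesgue_sets_translation[OF assms])
qed

lemma integrable_indicator_bounded:
  fixes h :: "real \<Rightarrow> real"
  assumes "h \<in> borel_measurable lebesgue" "A \<in> sets lebesgue" "A \<subseteq> {a..b}"
    and "\<And>x. x \<in> A \<Longrightarrow> \<bar>h x\<bar> \<le> B"
  shows "integrable lebesgue (\<lambda>x. indicator A x * h x)"
proof (rule integrableI_bounded_set[where A=A and B=B])
  have "emeasure lebesgue A \<le> emeasure lebesgue {a..b}"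
    using assms by (intro emeasure_mono) auto
  then show "emeasure lebesgue A < \<infinity>"
    using emeasure_lborel_cbox_finite[of a b] by (simp add: order.strict_trans1)
qed (use assms in \<open>auto simp: indicator_def\<close>)

lemma integrable_square_norm_trig_poly:
  assumes "A \<in> sets lebesgue" "A \<subseteq> {a0..b0}"
  shows "integrable lebesgue (\<lambda>t. indicator A t * (cmod (trig_poly F c t))\<^sup>2)"
  using assms square_norm_trig_poly_le[where F=F and a=c]
  by (intro integrable_indicator_bounded[where B="(\<Sum>l\<in>F. cmod (c l))\<^sup>2"]) auto

definition fiber_sum :: "nat \<Rightarrow> real set \<Rightarrow> (real \<Rightarrow> real) \<Rightarrow> real \<Rightarrow> real" where
  "fiber_sum N S h t = (\<Sum>m<N. indicator S (t + real m / real N) * h (t + real m / real N))"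

lemma fiber_sum_nonneg: "(\<And>x. 0 \<le> h x) \<Longrightarrow> 0 \<le> fiber_sum N S h t"
  unfolding fiber_sum_def by (intro sum_nonneg) auto

lemma borel_measurable_fiber_sum [measurable]:
  assumes [measurable]: "S \<in> sets lebesgue" "h \<in> borel_measurable lebesgue"
  shows "fiber_sum N S h \<in> borel_measurable lebesgue"
proof -
  have [measurable]: "(\<lambda>t. indicator S (t + c) * h (t + c)) \<in> borel_measurable lebesgue" for c
    by (rule borel_measurable_translate[where f="\<lambda>x. indicator S x * h x"]) measurable
  show ?thesis unfolding fiber_sum_def[abs_def] by measurable
qed

lemma integrable_fiber_sum:
  assumes "S \<in> sets lebesgue" "h \<in> borel_measurable lebesgue" "\<And>x. 0 \<le> h x" "\<And>x. h x \<le> B"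
  shows "integrable lebesgue (\<lambda>t. indicator {0..1/N} t * fiber_sum N S h t)"
proof (rule integrable_indicator_bounded[where B="N * B"])
  fix t
  have "fiber_sum N S h t \<le> (\<Sum>m<N. B)"
    unfolding fiber_sum_def using assms(3,4) by (intro sum_mono) (auto simp: indicator_def intro: order.trans)
  then show "\<bar>fiber_sum N S h t\<bar> \<le> N * B" using assms(3) by (simp add: fiber_sum_nonneg)
qed (use assms in auto)

lemma sum_indicator_grid_ge_1:
  assumes "N > 0" "x \<in> {0..1}"
  shows "1 \<le> (\<Sum>m<N. indicator {real m / real N .. (real m + 1) / real N} x :: real)"
proof -
  define m where "m = (if x = 1 then N - 1 else nat \<lfloor>x * N\<rfloor>)"
  have "m < N"
  proof (cases "x = 1")
    case False
    then have "x * N < N" using assms by (simp add: mult_less_cancel_right2)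
    then have "\<lfloor>x * N\<rfloor> < int N" by linarith
    then show ?thesis using False assms by (simp add: m_def)
  qed (use assms in \<open>simp add: m_def\<close>)
  moreover have "x \<in> {real m / real N .. (real m + 1) / real N}"
  proof (cases "x = 1")
    case True
    then show ?thesis using assms by (simp add: m_def of_nat_diff field_simps)
  next
    case False
    have "real m = of_int \<lfloor>x * N\<rfloor>" using False assms by (simp add: m_def)
    then have "real m \<le> x * N" "x * N \<le> real m + 1" by linarith+
    then show ?thesis using assms by (simp add: field_simps)
  qed
  ultimately show ?thesis
    by (intro order.trans[OF _ member_le_sum[of m]]) auto
qed

lemma sum_indicator_grid_le:
  "(\<Sum>m<N. indicator {real m / real N .. (real m + 1) / real N} x :: real) \<le> N"
  using sum_mono[of "{..<N}" "\<lambda>m. indicator {real m / real N .. (real m + 1) / real N} x :: real" "\<lambda>_. 1"]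
  by (simp add: indicator_def)

text \<open>The translates \<open>[0, 1/N] + m/N\<close> cover \<open>[0, 1]\<close>, overlapping only at endpoints.\<close>
lemma nn_integral_fiber_sum:
  assumes N: "N > 0" and [measurable]: "S \<in> sets lebesgue" "h \<in> borel_measurable lebesgue"
    and h0: "\<And>x. 0 \<le> h x"
  shows "(\<integral>\<^sup>+t. ennreal (indicator {0..1/N} t * fiber_sum N S h t) \<partial>lebesgue)
       = (\<integral>\<^sup>+x. ennreal ((\<Sum>m<N. indicator {real m / real N .. (real m + 1) / real N} x)
            * (indicator S x * h x)) \<partial>lebesgue)"
proof -
  define \<phi> where "\<phi> m x = indicator {real m / real N .. (real m + 1) / real N} x * (indicator S x * h x)"
    for m x
  have \<phi>_measurable[measurable]: "\<phi> m \<in> borel_measurable lebesgue" for m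
    unfolding \<phi>_def by measurable
  have \<phi>0: "0 \<le> \<phi> m x" for m x using h0 by (simp add: \<phi>_def)
  have shift: "indicator {0..1/N} t * (indicator S (t + m/N) * h (t + m/N)) = \<phi> m (m/N + t)" for m t
  proof -
    have "(real m / real N \<le> m/N + t \<and> m/N + t \<le> (real m + 1) / real N) \<longleftrightarrow> (0 \<le> t \<and> t \<le> 1/N)"
      using N by (auto simp: field_simps zero_le_mult_iff)
    then show ?thesis by (simp add: \<phi>_def indicator_def add.commute)
  qed
  have "(\<integral>\<^sup>+t. ennreal (indicator {0..1/N} t * fiber_sum N S h t) \<partial>lebesgue)
      = (\<integral>\<^sup>+t. (\<Sum>m<N. ennreal (\<phi> m (m/N + t))) \<partial>lebesgue)"
    unfolding fiber_sum_def sum_distrib_left shift using \<phi>0 by (simp add: sum_ennreal)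
  also have "\<dots> = (\<Sum>m<N. \<integral>\<^sup>+t. ennreal (\<phi> m (m/N + t)) \<partial>lebesgue)"
  proof (rule nn_integral_sum)
    fix m
    have "(\<lambda>t. \<phi> m (t + m/N)) \<in> borel_measurable lebesgue"
      by (rule borel_measurable_translate) measurable
    then show "(\<lambda>t. ennreal (\<phi> m (m/N + t))) \<in> borel_measurable lebesgue"
      by (simp add: add.commute)
  qed
  also have "\<dots> = (\<Sum>m<N. \<integral>\<^sup>+x. ennreal (\<phi> m x) \<partial>lebesgue)"
    using nn_integral_real_affine_lebesgue[of "\<lambda>x. ennreal (\<phi> _ x)" 1] by simp
  also have "\<dots> = (\<integral>\<^sup>+x. (\<Sum>m<N. ennreal (\<phi> m x)) \<partial>lebesgue)"
    by (rule nn_integral_sum[symmetric]) simp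
  also have "\<dots> = (\<integral>\<^sup>+x. ennreal ((\<Sum>m<N. indicator {real m / real N .. (real m + 1) / real N} x)
      * (indicator S x * h x)) \<partial>lebesgue)"
    using \<phi>0 by (simp add: sum_ennreal \<phi>_def sum_distrib_right)
  finally show ?thesis .
qed

lemma nn_integral_le_fiber_sum:
  assumes "N > 0" "S \<in> sets lebesgue" "S \<subseteq> {0..1}" "h \<in> borel_measurable lebesgue"
    and h0: "\<And>x. 0 \<le> h x"
  shows "(\<integral>\<^sup>+x. ennreal (indicator S x * h x) \<partial>lebesgue)
    \<le> (\<integral>\<^sup>+t. ennreal (indicator {0..1/N} t * fiber_sum N S h t) \<partial>lebesgue)"
  unfolding nn_integral_fiber_sum[OF assms(1,2,4) h0]
proof (intro nn_integral_mono ennreal_leI)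
  fix x
  show "indicator S x * h x
    \<le> (\<Sum>m<N. indicator {real m / real N .. (real m + 1) / real N} x) * (indicator S x * h x)"
    using sum_indicator_grid_ge_1[of N x] h0[of x] assms(1,3)
    by (cases "x \<in> S") (auto simp: mult_le_cancel_right1)
qed

lemma nn_integral_fiber_sum_le:
  assumes "N > 0" and [measurable]: "S \<in> sets lebesgue" "h \<in> borel_measurable lebesgue"
    and h0: "\<And>x. 0 \<le> h x"
  shows "(\<integral>\<^sup>+t. ennreal (indicator {0..1/N} t * fiber_sum N S h t) \<partial>lebesgue)
    \<le> N * (\<integral>\<^sup>+x. ennreal (indicator S x * h x) \<partial>lebesgue)"
proof -
  have "(\<integral>\<^sup>+t. ennreal (indicator {0..1/N} t * fiber_sum N S h t) \<partial>lebesgue)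
     \<le> (\<integral>\<^sup>+x. ennreal N * ennreal (indicator S x * h x) \<partial>lebesgue)"
    unfolding nn_integral_fiber_sum[OF assms]
  proof (intro nn_integral_mono)
    fix x
    have "(\<Sum>m<N. indicator {real m / real N .. (real m + 1) / real N} x) * (indicator S x * h x)
        \<le> N * (indicator S x * h x)"
      using sum_indicator_grid_le[of N x] h0[of x] by (intro mult_right_mono) auto
    then show "ennreal ((\<Sum>m<N. indicator {real m / real N .. (real m + 1) / real N} x)
        * (indicator S x * h x)) \<le> ennreal N * ennreal (indicator S x * h x)"
      using h0[of x] by (simp add: ennreal_mult[symmetric] ennreal_leI)
  qed
  also have "\<dots> = ennreal N * (\<integral>\<^sup>+x. ennreal (indicator S x * h x) \<partial>lebesgue)"
    by (intro nn_integral_cmult) measurable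
  finally show ?thesis by (simp add: ennreal_of_nat_eq_real_of_nat)
qed

lemma integral_fiber_sum_le:
  assumes "N > 0" and [measurable]: "S \<in> sets lebesgue" "h \<in> borel_measurable lebesgue"
    and h0: "\<And>x. 0 \<le> h x" and int: "integrable lebesgue (\<lambda>x. indicator S x * h x)"
  shows "(LINT t|lebesgue. indicator {0..1/N} t * fiber_sum N S h t)
    \<le> N * (LINT x|lebesgue. indicator S x * h x)"
proof -
  have I0: "0 \<le> (LINT x|lebesgue. indicator S x * h x)"
    using h0 by (intro Bochner_Integration.integral_nonneg) auto
  have "(\<integral>\<^sup>+t. ennreal (indicator {0..1/N} t * fiber_sum N S h t) \<partial>lebesgue)
      \<le> ennreal N * ennreal (LINT x|lebesgue. indicator S x * h x)"
    using nn_integral_fiber_sum_le[OF assms(1-4)] int h0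
    by (simp add: nn_integral_eq_integral ennreal_of_nat_eq_real_of_nat)
  also have "\<dots> = ennreal (N * (LINT x|lebesgue. indicator S x * h x))"
    using I0 by (simp add: ennreal_mult)
  finally have le: "(\<integral>\<^sup>+t. ennreal (indicator {0..1/N} t * fiber_sum N S h t) \<partial>lebesgue)
      \<le> ennreal (N * (LINT x|lebesgue. indicator S x * h x))" .
  have "(LINT t|lebesgue. indicator {0..1/N} t * fiber_sum N S h t)
      = enn2real (\<integral>\<^sup>+t. ennreal (indicator {0..1/N} t * fiber_sum N S h t) \<partial>lebesgue)"
    using h0 by (intro integral_eq_nn_integral) (auto intro!: mult_nonneg_nonneg fiber_sum_nonneg)
  also have "\<dots> \<le> N * (LINT x|lebesgue. indicator S x * h x)"
    using enn2real_mono[OF le] I0 by simp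
  finally show ?thesis .
qed

section \<open>Riesz bases of exponentials\<close>

lemma L2_norm_sq_nonneg: "0 \<le> L2_norm_sq A f"
  unfolding L2_norm_sq_def by (intro Bochner_Integration.integral_nonneg) auto

lemma nn_integral_eq_L2_norm_sq:
  assumes [measurable]: "A \<in> sets lebesgue" "h \<in> borel_measurable lebesgue"
    and fin: "(\<integral>\<^sup>+x. ennreal (indicator A x * (cmod (h x))\<^sup>2) \<partial>lebesgue) < \<infinity>"
  shows "(\<integral>\<^sup>+x. ennreal (indicator A x * (cmod (h x))\<^sup>2) \<partial>lebesgue) = ennreal (L2_norm_sq A h)"
    and "in_L2 A h"
proof -
  have int: "integrable lebesgue (\<lambda>x. indicator A x * (cmod (h x))\<^sup>2)"
    by (rule integrableI_nonneg) (use fin in auto)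
  then show "in_L2 A h" unfolding in_L2_def by (intro conjI int) measurable
  show "(\<integral>\<^sup>+x. ennreal (indicator A x * (cmod (h x))\<^sup>2) \<partial>lebesgue) = ennreal (L2_norm_sq A h)"
    unfolding L2_norm_sq_def by (rule nn_integral_eq_integral[OF int]) auto
qed

lemma nn_integral_diff_trig_poly_finite:
  assumes A[measurable]: "A \<in> sets lebesgue" "A \<subseteq> {a0..b0}"
    and [measurable]: "r \<in> borel_measurable lebesgue"
    and fin: "(\<integral>\<^sup>+x. ennreal (indicator A x * (cmod (r x))\<^sup>2) \<partial>lebesgue) < \<infinity>"
  shows "(\<integral>\<^sup>+x. ennreal (indicator A x * (cmod (r x - trig_poly F a x))\<^sup>2) \<partial>lebesgue) < \<infinity>"
proof -
  define M where "M = (\<Sum>l\<in>F. cmod (a l))"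
  have "(\<integral>\<^sup>+x. ennreal (indicator A x * (cmod (r x - trig_poly F a x))\<^sup>2) \<partial>lebesgue)
     \<le> (\<integral>\<^sup>+x. 2 * ennreal (indicator A x * (cmod (r x))\<^sup>2) + ennreal (2 * M\<^sup>2) * indicator A x \<partial>lebesgue)"
  proof (intro nn_integral_mono)
    fix x
    have "(cmod (r x - trig_poly F a x))\<^sup>2 \<le> 2 * (cmod (r x))\<^sup>2 + 2 * M\<^sup>2"
      using norm_diff_square_le[of "r x" "trig_poly F a x"] square_norm_trig_poly_le[where F=F and a=a and t=x]
      by (simp add: M_def)
    then have "indicator A x * (cmod (r x - trig_poly F a x))\<^sup>2
        \<le> 2 * (indicator A x * (cmod (r x))\<^sup>2) + (2 * M\<^sup>2) * indicator A x"
      by (cases "x \<in> A") auto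
    moreover have "ennreal (2 * (indicator A x * (cmod (r x))\<^sup>2) + (2 * M\<^sup>2) * indicator A x)
        = 2 * ennreal (indicator A x * (cmod (r x))\<^sup>2) + ennreal (2 * M\<^sup>2) * indicator A x"
      by (cases "x \<in> A") (simp_all add: ennreal_plus ennreal_mult)
    ultimately show "ennreal (indicator A x * (cmod (r x - trig_poly F a x))\<^sup>2)
        \<le> 2 * ennreal (indicator A x * (cmod (r x))\<^sup>2) + ennreal (2 * M\<^sup>2) * indicator A x"
      by (metis ennreal_leI)
  qed
  also have "\<dots> = 2 * (\<integral>\<^sup>+x. ennreal (indicator A x * (cmod (r x))\<^sup>2) \<partial>lebesgue)
      + ennreal (2 * M\<^sup>2) * emeasure lebesgue A"
    by (subst nn_integral_add) (auto simp: nn_integral_cmult nn_integral_cmult_indicator)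
  also have "\<dots> < \<infinity>"
  proof -
    have "emeasure lebesgue A \<le> emeasure lebesgue {a0..b0}" using A by (intro emeasure_mono) auto
    then have "emeasure lebesgue A < \<infinity>"
      using emeasure_lborel_cbox_finite[of a0 b0] by (simp add: order.strict_trans1)
    then show ?thesis using fin by (simp add: ennreal_mult_less_top)
  qed
  finally show ?thesis .
qed

lemma riesz_basis_expI:
  assumes dense: "\<And>f \<epsilon>. in_L2 A f \<Longrightarrow> \<epsilon> > 0 \<Longrightarrow>
      \<exists>F a. finite F \<and> F \<subseteq> Lam \<and> L2_norm_sq A (\<lambda>t. f t - trig_poly F a t) < \<epsilon>"
    and "c > 0" "C > 0"
    and lower: "\<And>F a. finite F \<Longrightarrow> F \<subseteq> Lam \<Longrightarrow>
      c * (\<Sum>l\<in>F. (cmod (a l))\<^sup>2) \<le> L2_norm_sq A (trig_poly F a)"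
    and upper: "\<And>F a. finite F \<Longrightarrow> F \<subseteq> Lam \<Longrightarrow>
      L2_norm_sq A (trig_poly F a) \<le> C * (\<Sum>l\<in>F. (cmod (a l))\<^sup>2)"
  shows "riesz_basis_exp A Lam"
proof -
  have lower': "min c C * (\<Sum>l\<in>F. (cmod (a l))\<^sup>2) \<le> L2_norm_sq A (trig_poly F a)"
    if "finite F" "F \<subseteq> Lam" for F a
  proof -
    have "min c C * (\<Sum>l\<in>F. (cmod (a l))\<^sup>2) \<le> c * (\<Sum>l\<in>F. (cmod (a l))\<^sup>2)"
      by (intro mult_right_mono sum_nonneg) auto
    then show ?thesis using lower[OF that, of a] by linarith
  qed
  have "min c C > 0" "min c C \<le> C" using assms(2,3) by auto
  with dense lower' upper show ?thesis unfolding riesz_basis_exp_def by blast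
qed

lemma riesz_basis_exp_dense:
  assumes "riesz_basis_exp A Lam" "in_L2 A f" "\<epsilon> > 0"
  shows "\<exists>F a. finite F \<and> F \<subseteq> Lam \<and> L2_norm_sq A (\<lambda>t. f t - trig_poly F a t) < \<epsilon>"
  using conjunct1[OF assms(1)[unfolded riesz_basis_exp_def]] assms(2,3) by blast

lemma riesz_basis_exp_lower:
  assumes "riesz_basis_exp A Lam"
  obtains c where "c > 0"
    "\<And>F a. finite F \<Longrightarrow> F \<subseteq> Lam \<Longrightarrow> c * (\<Sum>l\<in>F. (cmod (a l))\<^sup>2) \<le> L2_norm_sq A (trig_poly F a)"
proof -
  from conjunct2[OF assms[unfolded riesz_basis_exp_def]] obtain c C where "c > 0"
    "\<forall>F a. finite F \<longrightarrow> F \<subseteq> Lam \<longrightarrow> c * (\<Sum>l\<in>F. (cmod (a l))\<^sup>2) \<le> L2_norm_sq A (trig_poly F a)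
       \<and> L2_norm_sq A (trig_poly F a) \<le> C * (\<Sum>l\<in>F. (cmod (a l))\<^sup>2)"
    by blast
  then show thesis using that by blast
qed

section \<open>Fibres and layers\<close>

locale shifted_layers =
  fixes N :: nat and S :: "real set" and Lam :: "nat \<Rightarrow> real set"
  assumes N_pos: "N > 0" and S_sets [measurable]: "S \<in> sets lebesgue" and S_subset: "S \<subseteq> {0..1}"
    and Lam_subset: "\<forall>n\<in>{1..N}. Lam n \<subseteq> {real_of_int (int N * k) | k. True}"
begin

definition fiber :: "real \<Rightarrow> nat set" where
  "fiber t = {m \<in> {0..<N}. t + real m / real N \<in> S}"

definition root :: "nat \<Rightarrow> complex" where
  "root m = expo 1 (real m / real N)"

definition vandermonde_solve :: "nat set \<Rightarrow> (nat \<Rightarrow> complex) \<Rightarrow> nat \<Rightarrow> complex" where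
  "vandermonde_solve J w j = (\<Sum>m\<in>J. vandermonde_inv root J j m * w m)"

text \<open>A bound, uniform in \<open>J\<close>, for the entries of all the inverse matrices.\<close>
definition inv_bound :: real where
  "inv_bound = (\<Sum>J\<in>Pow {0..<N}. \<Sum>j\<in>{1..N}. \<Sum>m\<in>J. cmod (vandermonde_inv root J j m)) + 1"

lemma fiber_subset: "fiber t \<subseteq> {0..<N}"
  by (auto simp: fiber_def)

lemma card_fiber_le: "card (fiber t) \<le> N"
  using card_mono[OF _ fiber_subset] by fastforce

lemma sum_fiber: "(\<Sum>m\<in>fiber t. h (t + real m / real N)) = fiber_sum N S h t"
proof -
  have "(\<Sum>m\<in>fiber t. h (t + real m / real N))
      = (\<Sum>m\<in>{0..<N}. if t + real m / real N \<in> S then h (t + real m / real N) else 0)"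
    unfolding fiber_def by (rule sum.inter_filter) simp
  also have "\<dots> = fiber_sum N S h t"
    unfolding fiber_sum_def lessThan_atLeast0 by (intro sum.cong) (auto simp: indicator_def)
  finally show ?thesis .
qed

lemma mem_A_ge_iff: "t \<in> A_ge N S n \<longleftrightarrow> t \<in> {0..1/N} \<and> n \<le> card (fiber t)"
  using card_fiber_le[of t] by (auto simp: A_ge_def A_set_def fiber_def)

lemma A_ge_subset: "A_ge N S n \<subseteq> {0..1/N}"
  using mem_A_ge_iff by auto

lemma pred_translate_S [measurable]: "Measurable.pred lebesgue (\<lambda>t. t + c \<in> S)"
  using sets_lebesgue_translate[OF S_sets, of c] by (simp add: Measurable.pred_def)

lemma sets_fiber_eq [measurable]: "{t. fiber t = J} \<in> sets lebesgue"
proof (cases "J \<subseteq> {0..<N}")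
  case True
  then have fin: "finite J" using finite_subset by blast
  have "{t. fiber t = J} = {t. (\<forall>m\<in>J. t + real m / real N \<in> S)
      \<and> (\<forall>m\<in>{0..<N}-J. t + real m / real N \<notin> S)}"
    using True by (auto simp: fiber_def)
  also have "\<dots> = {t\<in>space lebesgue. (\<forall>m\<in>J. t + real m / real N \<in> S)
      \<and> (\<forall>m\<in>{0..<N}-J. t + real m / real N \<notin> S)}"
    by simp
  also have "\<dots> \<in> sets lebesgue" using fin by measurable
  finally show ?thesis .
next
  case False
  then have "{t. fiber t = J} = {}" using fiber_subset by auto
  then show ?thesis by simp
qed

lemma pred_fiber_eq [measurable]: "Measurable.pred lebesgue (\<lambda>t. fiber t = J)"
  using sets_fiber_eq by (simp add: Measurable.pred_def)

lemma sets_A_ge [measurable]: "A_ge N S n \<in> sets lebesgue"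
proof -
  have "A_ge N S n = {t. t \<in> {0..1/N} \<and> (\<exists>J\<in>Pow {0..<N}. fiber t = J \<and> n \<le> card J)}"
    using mem_A_ge_iff fiber_subset by auto
  also have "\<dots> \<in> sets lebesgue" by measurable
  finally show ?thesis .
qed

lemma root_power: "root m ^ j = expo (real j) (real m / real N)"
  by (simp add: root_def expo_power)

lemma inj_on_root: "inj_on root {0..<N}"
proof (rule inj_onI)
  fix m m' assume m: "m \<in> {0..<N}" "m' \<in> {0..<N}" and "root m = root m'"
  then obtain n :: int where "2 * of_real pi * \<i> * of_real (1 * (real m / real N))
      = 2 * of_real pi * \<i> * of_real (1 * (real m' / real N)) + of_int (2 * n) * pi * \<i>"
    by (auto simp: root_def expo_def exp_eq)
  then have "complex_of_real (2 * pi * (real m / real N)) * \<i>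
      = complex_of_real (2 * pi * (real m' / real N + of_int n)) * \<i>"
    by (simp add: algebra_simps)
  then have "(2 * pi) * (real m / real N) = (2 * pi) * (real m' / real N + of_int n)"
    using of_real_eq_iff by (metis complex_i_not_zero mult_cancel_right)
  then have "real m / real N = real m' / real N + of_int n"
    using mult_left_cancel[of "2 * pi" "real m / real N" "real m' / real N + of_int n"] by simp
  then have e: "real m = real m' + of_int n * real N" using N_pos by (simp add: field_simps)
  have "n = 0"
  proof (rule ccontr)
    assume "n \<noteq> 0"
    then have "1 \<le> \<bar>real_of_int n\<bar>" by (metis of_int_1_le_iff of_int_abs zero_less_abs_iff int_one_le_iff_zero_less)
    then have "real N \<le> \<bar>of_int n * real N\<bar>"
      using mult_right_mono[of 1 "\<bar>real_of_int n\<bar>" "real N"] by (simp add: abs_mult)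
    then show False using e m by auto
  qed
  then show "m = m'" using e by simp
qed

lemma vandermonde_solve_power:
  assumes "J \<subseteq> {0..<N}" "j \<in> {1..card J}" "j' \<in> {1..card J}"
  shows "vandermonde_solve J (\<lambda>m. root m ^ j') j = (if j = j' then 1 else 0)"
  using inv_mult_vandermonde[of J root j j'] assms finite_subset[OF assms(1)]
    inj_on_subset[OF inj_on_root assms(1)]
  by (auto simp: vandermonde_solve_def root_def expo_def)

lemma vandermonde_solve_recombine:
  assumes J: "J \<subseteq> {0..<N}" and "m' \<in> J"
  shows "(\<Sum>j\<in>{1..card J}. root m' ^ j * vandermonde_solve J w j) = w m'"
proof -
  have "(\<Sum>j\<in>{1..card J}. root m' ^ j * vandermonde_solve J w j)
      = (\<Sum>m\<in>J. w m * (\<Sum>j\<in>{1..card J}. root m' ^ j * vandermonde_inv root J j m))"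
    unfolding vandermonde_solve_def
    by (simp add: sum_distrib_left sum_distrib_right mult_ac) (rule sum.swap)
  also have "\<dots> = (\<Sum>m\<in>J. w m * (if m = m' then 1 else 0))"
    using vandermonde_mult_inv[of J root _ m'] finite_subset[OF J] inj_on_subset[OF inj_on_root J] assms
    by (intro sum.cong) (auto simp: root_def expo_def)
  also have "\<dots> = w m'" using finite_subset[OF J] assms by (simp add: if_distrib cong: if_cong)
  finally show ?thesis .
qed

lemma vandermonde_solve_sum:
  "vandermonde_solve J (\<lambda>m. \<Sum>i\<in>I. c i * f i m) j = (\<Sum>i\<in>I. c i * vandermonde_solve J (f i) j)"
  unfolding vandermonde_solve_def by (simp add: sum_distrib_left mult_ac) (rule sum.swap)

lemma vandermonde_solve_scale:
  "vandermonde_solve J (\<lambda>m. c * w m) j = c * vandermonde_solve J w j"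
  unfolding vandermonde_solve_def by (simp add: sum_distrib_left mult_ac)

lemma vandermonde_solve_diff:
  "vandermonde_solve J (\<lambda>m. v m - w m) j = vandermonde_solve J v j - vandermonde_solve J w j"
  unfolding vandermonde_solve_def by (simp add: algebra_simps sum_subtractf)

lemma norm_vandermonde_inv_le:
  assumes J: "J \<subseteq> {0..<N}" and j: "j \<in> {1..N}" and m: "m \<in> J"
  shows "cmod (vandermonde_inv root J j m) \<le> inv_bound"
proof -
  have "cmod (vandermonde_inv root J j m) \<le> (\<Sum>m\<in>J. cmod (vandermonde_inv root J j m))"
    using finite_subset[OF J] m by (intro member_le_sum) auto
  also have "\<dots> \<le> (\<Sum>j\<in>{1..N}. \<Sum>m\<in>J. cmod (vandermonde_inv root J j m))"
    using j by (intro member_le_sum[of j]) (auto intro: sum_nonneg)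
  also have "\<dots> \<le> (\<Sum>J\<in>Pow {0..<N}. \<Sum>j\<in>{1..N}. \<Sum>m\<in>J. cmod (vandermonde_inv root J j m))"
    using J by (intro member_le_sum[of J]) (auto intro!: sum_nonneg)
  finally show ?thesis by (simp add: inv_bound_def)
qed

lemma inv_bound_pos: "inv_bound > 0"
  unfolding inv_bound_def by (intro add_nonneg_pos sum_nonneg) auto

lemma square_norm_vandermonde_solve_le:
  assumes J: "J \<subseteq> {0..<N}" and j: "j \<in> {1..N}"
  shows "(cmod (vandermonde_solve J w j))\<^sup>2 \<le> inv_bound\<^sup>2 * N * (\<Sum>m\<in>J. (cmod (w m))\<^sup>2)"
proof -
  have "cmod (vandermonde_solve J w j) \<le> (\<Sum>m\<in>J. cmod (vandermonde_inv root J j m * w m))"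
    unfolding vandermonde_solve_def by (rule norm_sum)
  also have "\<dots> \<le> (\<Sum>m\<in>J. inv_bound * cmod (w m))"
    using norm_vandermonde_inv_le[OF J j] by (intro sum_mono) (simp add: norm_mult mult_right_mono)
  finally have "(cmod (vandermonde_solve J w j))\<^sup>2 \<le> (inv_bound * (\<Sum>m\<in>J. cmod (w m)))\<^sup>2"
    by (intro power_mono) (auto simp: sum_distrib_left)
  also have "\<dots> \<le> inv_bound\<^sup>2 * (card J * (\<Sum>m\<in>J. (cmod (w m))\<^sup>2))"
    unfolding power_mult_distrib by (intro mult_left_mono sum_square_le_card_mult) auto
  also have "\<dots> \<le> inv_bound\<^sup>2 * (N * (\<Sum>m\<in>J. (cmod (w m))\<^sup>2))"
    using card_mono[OF _ J] by (intro mult_left_mono mult_right_mono sum_nonneg) auto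
  finally show ?thesis by (simp add: mult_ac)
qed

definition layer :: "nat \<Rightarrow> real set" where
  "layer j = (\<lambda>x. x + real j) ` Lam j"

definition Lambda :: "real set" where
  "Lambda = (\<Union>j\<in>{1..N}. layer j)"

lemma layer_memE:
  assumes "j \<in> {1..N}" "l \<in> layer j"
  obtains k :: int where "l = real_of_int (int N * k) + real j"
proof -
  from assms(2) obtain x where x: "x \<in> Lam j" "l = x + real j" by (auto simp: layer_def)
  with Lam_subset assms(1) obtain k where "x = real_of_int (int N * k)" by blast
  with x that show thesis by blast
qed

lemma layers_disjoint:
  assumes "j \<in> {1..N}" "j' \<in> {1..N}" "j \<noteq> j'"
  shows "layer j \<inter> layer j' = {}"
proof (rule ccontr)
  assume "layer j \<inter> layer j' \<noteq> {}"
  then obtain l where l: "l \<in> layer j" "l \<in> layer j'" by auto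
  obtain k where k: "l = real_of_int (int N * k) + real j" using layer_memE[OF assms(1) l(1)] .
  obtain k' where k': "l = real_of_int (int N * k') + real j'" using layer_memE[OF assms(2) l(2)] .
  have "int N * k + int j = int N * k' + int j'"
    using k k' by (metis of_int_eq_iff of_int_add of_int_of_nat_eq)
  then have e: "int N * (k - k') = int j' - int j" by (simp add: algebra_simps)
  have "k - k' \<noteq> 0" using e assms by auto
  then have "\<bar>int N * (k - k')\<bar> \<ge> int N" using N_pos by (simp add: abs_mult)
  moreover have "\<bar>int j' - int j\<bar> < int N" using assms by auto
  ultimately show False using e by simp
qed

lemma sum_over_layers:
  assumes "finite F" "F \<subseteq> Lambda"
  shows "(\<Sum>l\<in>F. f l) = (\<Sum>j\<in>{1..N}. \<Sum>l\<in>F \<inter> layer j. f l)"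
proof -
  have "F = (\<Union>j\<in>{1..N}. F \<inter> layer j)" using assms(2) by (auto simp: Lambda_def)
  then have "(\<Sum>l\<in>F. f l) = (\<Sum>l\<in>(\<Union>j\<in>{1..N}. F \<inter> layer j). f l)" by simp
  also have "\<dots> = (\<Sum>j\<in>{1..N}. \<Sum>l\<in>F \<inter> layer j. f l)"
  proof (rule sum.UNION_disjoint)
    show "\<forall>i\<in>{1..N}. \<forall>j\<in>{1..N}. i \<noteq> j \<longrightarrow> (F \<inter> layer i) \<inter> (F \<inter> layer j) = {}"
      using layers_disjoint by blast
  qed (use assms(1) in auto)
  finally show ?thesis .
qed

text \<open>Frequencies in the \<open>j\<close>-th layer are \<open>j\<close> modulo \<open>N\<close>, so translating by \<open>m/N\<close>
  multiplies them by the same root of unity \<open>root m ^ j\<close>.\<close>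
lemma expo_layer_shift:
  assumes "j \<in> {1..N}" "l \<in> layer j"
  shows "expo l (t + real m / real N) = root m ^ j * expo l t"
proof -
  obtain k where k: "l = real_of_int (int N * k) + real j" using layer_memE[OF assms] .
  have "real_of_int (int N * k) * (real m / real N) = of_int (k * int m)" using N_pos by simp
  then have "expo (real_of_int (int N * k)) (real m / real N) = 1"
    by (intro expo_Ints) simp
  then have "expo l (real m / real N) = root m ^ j"
    by (simp add: k expo_add_freq root_power)
  then show ?thesis by (simp add: expo_add_time mult.commute)
qed

lemma trig_poly_layer_shift:
  assumes "j \<in> {1..N}" "G \<subseteq> layer j"
  shows "trig_poly G a (t + real m / real N) = root m ^ j * trig_poly G a t"
  using assms expo_layer_shift[OF assms(1)] by (auto simp: sum_distrib_left mult_ac intro!: sum.cong)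

lemma trig_poly_fiber_expansion:
  assumes "finite F" "F \<subseteq> Lambda"
  shows "trig_poly F a (t + real m / real N) = (\<Sum>j\<in>{1..N}. trig_poly (F \<inter> layer j) a t * root m ^ j)"
  unfolding sum_over_layers[OF assms]
  using trig_poly_layer_shift[of _ "F \<inter> layer _" a t m] by (intro sum.cong) (auto simp: mult.commute)

lemma layer_separated:
  assumes "j \<in> {1..N}" "l \<in> layer j" "l' \<in> layer j"
  shows "(l - l') * (1 / real N) \<in> \<int>"
proof -
  obtain k where k: "l = real_of_int (int N * k) + real j" using layer_memE[OF assms(1,2)] .
  obtain k' where k': "l' = real_of_int (int N * k') + real j" using layer_memE[OF assms(1,3)] .
  have "(l - l') * (1 / real N) = of_int (k - k')" using N_pos by (simp add: k k' field_simps)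
  then show ?thesis by simp
qed

lemma Lambda_Ints:
  assumes "l \<in> Lambda"
  shows "l \<in> \<int>"
proof -
  from assms obtain j where j: "j \<in> {1..N}" "l \<in> layer j" by (auto simp: Lambda_def)
  then obtain k where "l = real_of_int (int N * k) + real j" by (rule layer_memE)
  then show ?thesis by simp
qed

section \<open>The Riesz bounds\<close>

lemma layer_part_eq_solve:
  assumes "finite F" "F \<subseteq> Lambda" and j: "j \<in> {1..card (fiber t)}"
  shows "trig_poly (F \<inter> layer j) a t
    = vandermonde_solve (fiber t) (\<lambda>m. trig_poly F a (t + real m / real N)) j
      - (\<Sum>j'\<in>{card (fiber t)<..N}.
           trig_poly (F \<inter> layer j') a t * vandermonde_solve (fiber t) (\<lambda>m. root m ^ j') j)"
proof -
  let ?J = "fiber t" and ?V = "\<lambda>j'. trig_poly (F \<inter> layer j') a t"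
  let ?s = "\<lambda>j'. vandermonde_solve ?J (\<lambda>m. root m ^ j') j"
  have "vandermonde_solve ?J (\<lambda>m. trig_poly F a (t + real m / real N)) j = (\<Sum>j'\<in>{1..N}. ?V j' * ?s j')"
    unfolding trig_poly_fiber_expansion[OF assms(1,2)] by (rule vandermonde_solve_sum)
  also have "\<dots> = (\<Sum>j'\<in>{1..card ?J}. ?V j' * ?s j') + (\<Sum>j'\<in>{card ?J<..N}. ?V j' * ?s j')"
    using card_fiber_le[of t] by (subst sum.union_disjoint[symmetric]) (auto intro!: sum.cong)
  also have "(\<Sum>j'\<in>{1..card ?J}. ?V j' * ?s j') = (\<Sum>j'\<in>{1..card ?J}. if j' = j then ?V j' else 0)"
    using j by (intro sum.cong refl) (auto simp: vandermonde_solve_power[OF fiber_subset])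
  finally show ?thesis using j by simp
qed

lemma square_norm_solve_tail_le:
  assumes J: "J \<subseteq> {0..<N}" and j: "j \<in> {1..N}"
  shows "(cmod (\<Sum>j'\<in>{card J<..N}. v j' * vandermonde_solve J (\<lambda>m. root m ^ j') j))\<^sup>2
    \<le> inv_bound\<^sup>2 * N^3 * (\<Sum>j'\<in>{card J<..N}. (cmod (v j'))\<^sup>2)"
proof -
  let ?s = "\<lambda>j'. vandermonde_solve J (\<lambda>m. root m ^ j') j"
  have s: "cmod (?s j') \<le> inv_bound * N" for j'
  proof -
    have "(\<Sum>m\<in>J. (cmod (root m ^ j'))\<^sup>2) = card J"
      by (simp add: root_def norm_power)
    then have "(cmod (?s j'))\<^sup>2 \<le> inv_bound\<^sup>2 * N * card J"
      using square_norm_vandermonde_solve_le[OF J j, of "\<lambda>m. root m ^ j'"] by (simp only:)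
    also have "\<dots> \<le> inv_bound\<^sup>2 * N * N"
      using card_mono[OF _ J] by (intro mult_left_mono) auto
    also have "\<dots> = (inv_bound * N)\<^sup>2" by (simp add: power2_eq_square)
    finally have "(cmod (?s j'))\<^sup>2 \<le> (inv_bound * N)\<^sup>2" .
    then show ?thesis by (rule power2_le_imp_le) (use inv_bound_pos in simp)
  qed
  have "cmod (\<Sum>j'\<in>{card J<..N}. v j' * ?s j') \<le> (\<Sum>j'\<in>{card J<..N}. inv_bound * N * cmod (v j'))"
  proof (intro order.trans[OF norm_sum] sum_mono)
    fix j'
    show "cmod (v j' * ?s j') \<le> inv_bound * N * cmod (v j')"
      using mult_left_mono[OF s[of j'] norm_ge_zero[of "v j'"]] by (simp add: norm_mult mult_ac)
  qed
  also have "\<dots> = inv_bound * N * (\<Sum>j'\<in>{card J<..N}. cmod (v j'))"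
    by (simp add: sum_distrib_left)
  finally have "(cmod (\<Sum>j'\<in>{card J<..N}. v j' * ?s j'))\<^sup>2 \<le> (inv_bound * N * (\<Sum>j'\<in>{card J<..N}. cmod (v j')))\<^sup>2"
    by (intro power_mono) auto
  also have "\<dots> = (inv_bound * N)\<^sup>2 * (\<Sum>j'\<in>{card J<..N}. cmod (v j'))\<^sup>2"
    by (simp add: power_mult_distrib)
  also have "\<dots> \<le> (inv_bound * N)\<^sup>2 * (card {card J<..N} * (\<Sum>j'\<in>{card J<..N}. (cmod (v j'))\<^sup>2))"
    by (intro mult_left_mono sum_square_le_card_mult) auto
  also have "\<dots> \<le> (inv_bound * N)\<^sup>2 * (N * (\<Sum>j'\<in>{card J<..N}. (cmod (v j'))\<^sup>2))"
    by (intro mult_left_mono mult_right_mono sum_nonneg) auto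
  finally show ?thesis by (simp add: power2_eq_square power3_eq_cube mult_ac)
qed

lemma indicator_square_norm_layer_part_le:
  assumes F: "finite F" "F \<subseteq> Lambda" and j: "j \<in> {1..N}"
  shows "indicator (A_ge N S j) t * (cmod (trig_poly (F \<inter> layer j) a t))\<^sup>2
    \<le> 2 * inv_bound\<^sup>2 * N * (indicator {0..1/N} t * fiber_sum N S (\<lambda>x. (cmod (trig_poly F a x))\<^sup>2) t)
     + (\<Sum>j'\<in>{j<..N}. 2 * inv_bound\<^sup>2 * N^3
         * (indicator {0..1/N} t * (cmod (trig_poly (F \<inter> layer j') a t))\<^sup>2))"
proof (cases "t \<in> A_ge N S j")
  case False
  then show ?thesis by (auto intro!: add_nonneg_nonneg mult_nonneg_nonneg sum_nonneg fiber_sum_nonneg)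
next
  case t: True
  let ?J = "fiber t" and ?V = "\<lambda>j'. trig_poly (F \<inter> layer j') a t"
  have jJ: "j \<in> {1..card ?J}" using j t by (simp add: mem_A_ge_iff)
  have "(\<Sum>j'\<in>{card ?J<..N}. (cmod (?V j'))\<^sup>2) \<le> (\<Sum>j'\<in>{j<..N}. (cmod (?V j'))\<^sup>2)"
    using jJ by (intro sum_mono2) auto
  then have "(cmod (\<Sum>j'\<in>{card ?J<..N}. ?V j' * vandermonde_solve ?J (\<lambda>m. root m ^ j') j))\<^sup>2
      \<le> inv_bound\<^sup>2 * N^3 * (\<Sum>j'\<in>{j<..N}. (cmod (?V j'))\<^sup>2)"
    by (rule order.trans[OF square_norm_solve_tail_le[OF fiber_subset j] mult_left_mono]) auto
  moreover have "(cmod (vandermonde_solve ?J (\<lambda>m. trig_poly F a (t + real m / real N)) j))\<^sup>2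
      \<le> inv_bound\<^sup>2 * N * fiber_sum N S (\<lambda>x. (cmod (trig_poly F a x))\<^sup>2) t"
    using square_norm_vandermonde_solve_le[OF fiber_subset j, of t "\<lambda>m. trig_poly F a (t + real m / real N)"]
      sum_fiber[where t=t and h="\<lambda>x. (cmod (trig_poly F a x))\<^sup>2"] by simp
  ultimately have "(cmod (?V j))\<^sup>2 \<le> 2 * inv_bound\<^sup>2 * N * fiber_sum N S (\<lambda>x. (cmod (trig_poly F a x))\<^sup>2) t
      + 2 * inv_bound\<^sup>2 * N^3 * (\<Sum>j'\<in>{j<..N}. (cmod (?V j'))\<^sup>2)"
    unfolding layer_part_eq_solve[OF F jJ]
    using norm_diff_square_le[of "vandermonde_solve ?J (\<lambda>m. trig_poly F a (t + real m / real N)) j"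
        "\<Sum>j'\<in>{card ?J<..N}. ?V j' * vandermonde_solve ?J (\<lambda>m. root m ^ j') j"]
    by linarith
  moreover have "t \<in> {0..1/N}" using t A_ge_subset by blast
  ultimately show ?thesis using t by (simp add: sum_distrib_left mult_ac)
qed

lemma layer_lower_bound:
  assumes "finite F" and j: "j \<in> {1..N}"
    and lower: "\<And>G b. finite G \<Longrightarrow> G \<subseteq> Lam j \<Longrightarrow>
      c * (\<Sum>l\<in>G. (cmod (b l))\<^sup>2) \<le> L2_norm_sq (A_ge N S j) (trig_poly G b)"
  shows "c * (\<Sum>l\<in>F \<inter> layer j. (cmod (a l))\<^sup>2)
    \<le> L2_norm_sq (A_ge N S j) (trig_poly (F \<inter> layer j) a)"
proof -
  define G where "G = {\<mu> \<in> Lam j. \<mu> + real j \<in> F}"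
  have bij: "bij_betw (\<lambda>x. x + real j) G (F \<inter> layer j)"
    by (rule bij_betwI[where g="\<lambda>x. x - real j"]) (auto simp: G_def layer_def)
  have "finite G" using bij_betw_finite[OF bij] assms(1) by simp
  moreover have "G \<subseteq> Lam j" by (auto simp: G_def)
  ultimately have "c * (\<Sum>l\<in>G. (cmod (a (l + real j)))\<^sup>2)
      \<le> L2_norm_sq (A_ge N S j) (trig_poly G (\<lambda>l. a (l + real j)))"
    by (rule lower)
  moreover have "(\<Sum>l\<in>G. (cmod (a (l + real j)))\<^sup>2) = (\<Sum>l\<in>F \<inter> layer j. (cmod (a l))\<^sup>2)"
    using sum.reindex_bij_betw[OF bij, of "\<lambda>l. (cmod (a l))\<^sup>2"] by simp
  moreover have "cmod (trig_poly G (\<lambda>l. a (l + real j)) t) = cmod (trig_poly (F \<inter> layer j) a t)" for t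
  proof -
    have "trig_poly (F \<inter> layer j) a t = (\<Sum>l\<in>G. a (l + real j) * expo (l + real j) t)"
      using sum.reindex_bij_betw[OF bij, of "\<lambda>l. a l * expo l t"] by simp
    also have "\<dots> = expo (real j) t * trig_poly G (\<lambda>l. a (l + real j)) t"
      by (simp add: expo_add_freq sum_distrib_left mult_ac)
    finally show ?thesis by (simp add: norm_mult)
  qed
  ultimately show ?thesis by (simp add: L2_norm_sq_def)
qed

lemma parseval_layer:
  assumes "finite F" "j \<in> {1..N}"
  shows "(LINT t|lebesgue. indicator {0..1/N} t * (cmod (trig_poly (F \<inter> layer j) a t))\<^sup>2)
    = (\<Sum>l\<in>F \<inter> layer j. (cmod (a l))\<^sup>2) / N"
  using parseval_Icc[of "1/N" "F \<inter> layer j" a] assms N_pos layer_separated[OF assms(2)] by simp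

lemma integral_layer_part_le:
  assumes F: "finite F" "F \<subseteq> Lambda" and j: "j \<in> {1..N}"
  shows "L2_norm_sq (A_ge N S j) (trig_poly (F \<inter> layer j) a)
    \<le> 2 * inv_bound\<^sup>2 * (real N)\<^sup>2 * (L2_norm_sq S (trig_poly F a)
         + (\<Sum>j'\<in>{j<..N}. \<Sum>l\<in>F \<inter> layer j'. (cmod (a l))\<^sup>2))"
proof -
  define C1 where "C1 = 2 * inv_bound\<^sup>2 * N"
  define C2 where "C2 = 2 * inv_bound\<^sup>2 * N^3"
  let ?Q = "fiber_sum N S (\<lambda>x. (cmod (trig_poly F a x))\<^sup>2)"
  let ?V = "\<lambda>j' t. (cmod (trig_poly (F \<inter> layer j') a t))\<^sup>2"
  have int_S: "integrable lebesgue (\<lambda>x. indicator S x * (cmod (trig_poly F a x))\<^sup>2)"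
    using S_subset by (intro integrable_square_norm_trig_poly) auto
  have int_V: "integrable lebesgue (\<lambda>t. indicator A t * ?V j' t)"
    if "A \<subseteq> {0..1/N}" "A \<in> sets lebesgue" for A j'
    using that by (intro integrable_square_norm_trig_poly) auto
  have int_Q: "integrable lebesgue (\<lambda>t. indicator {0..1/N} t * ?Q t)"
    using square_norm_trig_poly_le[where F=F and a=a] by (intro integrable_fiber_sum) auto
  have pointwise: "indicator (A_ge N S j) t * ?V j t
      \<le> C1 * (indicator {0..1/N} t * ?Q t) + (\<Sum>j'\<in>{j<..N}. C2 * (indicator {0..1/N} t * ?V j' t))" for t
    unfolding C1_def C2_def by (rule indicator_square_norm_layer_part_le[OF F j])
  have "L2_norm_sq (A_ge N S j) (trig_poly (F \<inter> layer j) a)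
      \<le> (LINT t|lebesgue. C1 * (indicator {0..1/N} t * ?Q t)
           + (\<Sum>j'\<in>{j<..N}. C2 * (indicator {0..1/N} t * ?V j' t)))"
    unfolding L2_norm_sq_def using A_ge_subset
    by (intro integral_mono pointwise int_V Bochner_Integration.integrable_add
        integrable_mult_right Bochner_Integration.integrable_sum int_Q) auto
  also have "\<dots> = C1 * (LINT t|lebesgue. indicator {0..1/N} t * ?Q t)
      + (\<Sum>j'\<in>{j<..N}. C2 * (LINT t|lebesgue. indicator {0..1/N} t * ?V j' t))"
    using int_Q int_V[of "{0..1/N}"]
    by (simp add: Bochner_Integration.integral_add Bochner_Integration.integrable_sum
        Bochner_Integration.integral_sum)
  also have "\<dots> \<le> C1 * (N * L2_norm_sq S (trig_poly F a))
      + (\<Sum>j'\<in>{j<..N}. C2 * ((\<Sum>l\<in>F \<inter> layer j'. (cmod (a l))\<^sup>2) / N))"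
    unfolding L2_norm_sq_def using F(1) j
    by (intro add_mono mult_left_mono sum_mono integral_fiber_sum_le[OF N_pos S_sets _ _ int_S])
      (auto simp: C1_def C2_def parseval_layer)
  also have "\<dots> = 2 * inv_bound\<^sup>2 * (real N)\<^sup>2 * (L2_norm_sq S (trig_poly F a)
      + (\<Sum>j'\<in>{j<..N}. \<Sum>l\<in>F \<inter> layer j'. (cmod (a l))\<^sup>2))"
  proof -
    have C2: "C2 * (x / N) = 2 * inv_bound\<^sup>2 * (real N)\<^sup>2 * x" for x :: real
      using N_pos by (simp add: C2_def power2_eq_square power3_eq_cube)
    have C1: "C1 * (N * y) = 2 * inv_bound\<^sup>2 * (real N)\<^sup>2 * y" for y :: real
      by (simp add: C1_def power2_eq_square)
    show ?thesis by (simp only: C1 C2 distrib_left sum_distrib_left)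
  qed
  finally show ?thesis .
qed

lemma Lambda_upper_bound:
  assumes "finite F" "F \<subseteq> Lambda"
  shows "L2_norm_sq S (trig_poly F a) \<le> (\<Sum>l\<in>F. (cmod (a l))\<^sup>2)"
proof -
  have "L2_norm_sq S (trig_poly F a)
      \<le> (LINT t|lebesgue. indicator {0..1} t * (cmod (trig_poly F a t))\<^sup>2)"
    unfolding L2_norm_sq_def using S_subset
    by (intro integral_mono integrable_square_norm_trig_poly) (auto simp: indicator_def)
  also have "\<dots> = (\<Sum>l\<in>F. (cmod (a l))\<^sup>2)"
    using assms Lambda_Ints parseval_Icc[of 1 F a] by (auto intro: Ints_diff)
  finally show ?thesis .
qed


section \<open>Completeness\<close>

text \<open>The solution of the Vandermonde system \<open>r (t + m/N) = (\<Sum>j. root m ^ j * layer_coeff r t j)\<close>,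
  \<open>m \<in> fiber t\<close>. For \<open>r = trig_poly F a\<close> the \<open>j\<close>-th coefficient is the \<open>j\<close>-th layer of \<open>r\<close>,
  up to the contribution of the layers above \<open>card (fiber t)\<close>.\<close>
definition layer_coeff :: "(real \<Rightarrow> complex) \<Rightarrow> real \<Rightarrow> nat \<Rightarrow> complex" where
  "layer_coeff r t j = vandermonde_solve (fiber t) (\<lambda>m. r (t + real m / real N)) j"

definition finite_energy :: "(real \<Rightarrow> complex) \<Rightarrow> bool" where
  "finite_energy r \<longleftrightarrow> r \<in> borel_measurable lebesgue
     \<and> (\<integral>\<^sup>+x. ennreal (indicator S x * (cmod (r x))\<^sup>2) \<partial>lebesgue) < \<infinity>"

definition layer_error :: "nat \<Rightarrow> (real \<Rightarrow> complex) \<Rightarrow> ennreal" where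
  "layer_error n r = (\<Sum>j\<in>{1..n}. \<integral>\<^sup>+t. ennreal (indicator (A_ge N S j) t * (cmod (layer_coeff r t j))\<^sup>2) \<partial>lebesgue)"

lemma borel_measurable_layer_coeff [measurable]:
  assumes [measurable]: "r \<in> borel_measurable lebesgue"
  shows "(\<lambda>t. layer_coeff r t j) \<in> borel_measurable lebesgue"
proof -
  have [measurable]: "(\<lambda>t. r (t + c)) \<in> borel_measurable lebesgue" for c
    by (rule borel_measurable_translate) simp
  have "layer_coeff r t j = (\<Sum>J\<in>Pow {0..<N}. indicator {t. fiber t = J} t *\<^sub>R
      vandermonde_solve J (\<lambda>m. r (t + real m / real N)) j)" for t
  proof -
    have "(\<Sum>J\<in>Pow {0..<N}. indicator {t. fiber t = J} t *\<^sub>R vandermonde_solve J (\<lambda>m. r (t + real m / real N)) j)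
      = (\<Sum>J\<in>Pow {0..<N}. if J = fiber t then vandermonde_solve (fiber t) (\<lambda>m. r (t + real m / real N)) j else 0)"
      by (intro sum.cong) (auto simp: indicator_def)
    then show ?thesis using fiber_subset[of t] by (simp add: layer_coeff_def)
  qed
  moreover have "(\<lambda>t. \<Sum>J\<in>Pow {0..<N}. indicator {t. fiber t = J} t *\<^sub>R
      vandermonde_solve J (\<lambda>m. r (t + real m / real N)) j) \<in> borel_measurable lebesgue"
    unfolding vandermonde_solve_def by measurable
  ultimately show ?thesis by simp
qed

lemma layer_coeff_sub_layer_poly:
  assumes n: "n \<in> {1..card (fiber t)}" and G: "G \<subseteq> layer n" and j: "j \<in> {1..card (fiber t)}"
  shows "layer_coeff (\<lambda>x. r x - trig_poly G c x) t j
    = layer_coeff r t j - (if j = n then trig_poly G c t else 0)"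
proof -
  have n': "n \<in> {1..N}" using n card_fiber_le[of t] by auto
  have "vandermonde_solve (fiber t) (\<lambda>m. trig_poly G c (t + real m / real N)) j
      = trig_poly G c t * vandermonde_solve (fiber t) (\<lambda>m. root m ^ n) j"
    unfolding trig_poly_layer_shift[OF n' G] mult.commute[of "root _ ^ n"]
    by (rule vandermonde_solve_scale)
  then show ?thesis
    using vandermonde_solve_power[OF fiber_subset j n]
    by (simp add: layer_coeff_def vandermonde_solve_diff)
qed

lemma nn_integral_layer_coeff_le:
  assumes [measurable]: "r \<in> borel_measurable lebesgue" and j: "j \<in> {1..N}"
  shows "(\<integral>\<^sup>+t. ennreal (indicator (A_ge N S j) t * (cmod (layer_coeff r t j))\<^sup>2) \<partial>lebesgue)
    \<le> ennreal (inv_bound\<^sup>2 * N) * (N * (\<integral>\<^sup>+x. ennreal (indicator S x * (cmod (r x))\<^sup>2) \<partial>lebesgue))"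
proof -
  let ?h = "\<lambda>x. (cmod (r x))\<^sup>2"
  have "(\<integral>\<^sup>+t. ennreal (indicator (A_ge N S j) t * (cmod (layer_coeff r t j))\<^sup>2) \<partial>lebesgue)
      \<le> (\<integral>\<^sup>+t. ennreal (inv_bound\<^sup>2 * N) * ennreal (indicator {0..1/N} t * fiber_sum N S ?h t) \<partial>lebesgue)"
  proof (intro nn_integral_mono)
    fix t
    have "indicator (A_ge N S j) t * (cmod (layer_coeff r t j))\<^sup>2
        \<le> (inv_bound\<^sup>2 * N) * (indicator {0..1/N} t * fiber_sum N S ?h t)"
    proof (cases "t \<in> A_ge N S j")
      case True
      then have "t \<in> {0..1/N}" using A_ge_subset by blast
      then show ?thesis
        using True square_norm_vandermonde_solve_le[OF fiber_subset j, of t "\<lambda>m. r (t + real m / real N)"]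
        by (simp add: layer_coeff_def sum_fiber[where h = ?h])
    qed (auto intro!: mult_nonneg_nonneg fiber_sum_nonneg)
    then show "ennreal (indicator (A_ge N S j) t * (cmod (layer_coeff r t j))\<^sup>2)
        \<le> ennreal (inv_bound\<^sup>2 * N) * ennreal (indicator {0..1/N} t * fiber_sum N S ?h t)"
      by (simp add: ennreal_mult'[symmetric] ennreal_leI)
  qed
  also have "\<dots> = ennreal (inv_bound\<^sup>2 * N) * (\<integral>\<^sup>+t. ennreal (indicator {0..1/N} t * fiber_sum N S ?h t) \<partial>lebesgue)"
    by (rule nn_integral_cmult) measurable
  also have "\<dots> \<le> ennreal (inv_bound\<^sup>2 * N) * (N * (\<integral>\<^sup>+x. ennreal (indicator S x * ?h x) \<partial>lebesgue))"
    by (intro mult_left_mono nn_integral_fiber_sum_le[OF N_pos S_sets]) auto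
  finally show ?thesis .
qed

lemma fiber_sum_le_layer_coeffs:
  assumes t: "t \<in> {0..1/N}"
  shows "fiber_sum N S (\<lambda>x. (cmod (r x))\<^sup>2) t
    \<le> N * N * (\<Sum>j\<in>{1..N}. indicator (A_ge N S j) t * (cmod (layer_coeff r t j))\<^sup>2)"
proof -
  let ?J = "fiber t" and ?c = "\<lambda>j. (cmod (layer_coeff r t j))\<^sup>2"
  have "(cmod (r (t + real m / real N)))\<^sup>2 \<le> N * (\<Sum>j\<in>{1..card ?J}. ?c j)" if m: "m \<in> ?J" for m
  proof -
    have "r (t + real m / real N) = (\<Sum>j\<in>{1..card ?J}. root m ^ j * layer_coeff r t j)"
      using vandermonde_solve_recombine[OF fiber_subset m] by (simp add: layer_coeff_def)
    then have "cmod (r (t + real m / real N)) \<le> (\<Sum>j\<in>{1..card ?J}. cmod (layer_coeff r t j))"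
      by (auto intro!: order.trans[OF norm_sum] simp: norm_mult root_def norm_power)
    then have "(cmod (r (t + real m / real N)))\<^sup>2 \<le> (\<Sum>j\<in>{1..card ?J}. cmod (layer_coeff r t j))\<^sup>2"
      by (intro power_mono) auto
    also have "\<dots> \<le> card {1..card ?J} * (\<Sum>j\<in>{1..card ?J}. ?c j)"
      by (rule sum_square_le_card_mult)
    also have "\<dots> \<le> N * (\<Sum>j\<in>{1..card ?J}. ?c j)"
      using card_fiber_le[of t] by (intro mult_right_mono sum_nonneg) auto
    finally show ?thesis .
  qed
  then have "fiber_sum N S (\<lambda>x. (cmod (r x))\<^sup>2) t \<le> (\<Sum>m\<in>?J. N * (\<Sum>j\<in>{1..card ?J}. ?c j))"
    unfolding sum_fiber[where h="\<lambda>x. (cmod (r x))\<^sup>2", symmetric] by (rule sum_mono)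
  also have "\<dots> = card ?J * (N * (\<Sum>j\<in>{1..card ?J}. ?c j))" by simp
  also have "\<dots> \<le> N * (N * (\<Sum>j\<in>{1..card ?J}. ?c j))"
    using card_fiber_le[of t] by (intro mult_right_mono mult_nonneg_nonneg sum_nonneg) auto
  also have "(\<Sum>j\<in>{1..card ?J}. ?c j) = (\<Sum>j\<in>{1..N}. indicator (A_ge N S j) t * ?c j)"
    using t card_fiber_le[of t]
    by (intro sum.mono_neutral_cong_left) (auto simp: indicator_def mem_A_ge_iff)
  finally show ?thesis by (simp add: mult_ac)
qed

lemma nn_integral_le_layer_error:
  assumes [measurable]: "r \<in> borel_measurable lebesgue"
  shows "(\<integral>\<^sup>+x. ennreal (indicator S x * (cmod (r x))\<^sup>2) \<partial>lebesgue) \<le> ennreal (N * N) * layer_error N r"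
proof -
  let ?c = "\<lambda>j t. indicator (A_ge N S j) t * (cmod (layer_coeff r t j))\<^sup>2"
  have "(\<integral>\<^sup>+x. ennreal (indicator S x * (cmod (r x))\<^sup>2) \<partial>lebesgue)
      \<le> (\<integral>\<^sup>+t. ennreal (indicator {0..1/N} t * fiber_sum N S (\<lambda>x. (cmod (r x))\<^sup>2) t) \<partial>lebesgue)"
    by (rule nn_integral_le_fiber_sum[OF N_pos S_sets S_subset]) auto
  also have "\<dots> \<le> (\<integral>\<^sup>+t. ennreal (N * N) * (\<Sum>j\<in>{1..N}. ennreal (?c j t)) \<partial>lebesgue)"
  proof (intro nn_integral_mono)
    fix t
    have "indicator {0..1/N} t * fiber_sum N S (\<lambda>x. (cmod (r x))\<^sup>2) t \<le> (N * N) * (\<Sum>j\<in>{1..N}. ?c j t)"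
      using fiber_sum_le_layer_coeffs[of t r]
      by (cases "t \<in> {0..1/N}") (auto intro!: mult_nonneg_nonneg sum_nonneg)
    then show "ennreal (indicator {0..1/N} t * fiber_sum N S (\<lambda>x. (cmod (r x))\<^sup>2) t)
        \<le> ennreal (N * N) * (\<Sum>j\<in>{1..N}. ennreal (?c j t))"
      by (simp add: sum_ennreal ennreal_mult'[symmetric] ennreal_leI)
  qed
  also have "\<dots> = ennreal (N * N) * (\<integral>\<^sup>+t. (\<Sum>j\<in>{1..N}. ennreal (?c j t)) \<partial>lebesgue)"
    by (rule nn_integral_cmult) measurable
  also have "(\<integral>\<^sup>+t. (\<Sum>j\<in>{1..N}. ennreal (?c j t)) \<partial>lebesgue) = layer_error N r"
    unfolding layer_error_def by (rule nn_integral_sum) measurable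
  finally show ?thesis .
qed

lemma finite_energy_diff_trig_poly:
  "finite_energy r \<Longrightarrow> finite_energy (\<lambda>t. r t - trig_poly F a t)"
  using nn_integral_diff_trig_poly_finite[OF S_sets S_subset] by (auto simp: finite_energy_def)

end

locale riesz_layers = shifted_layers +
  assumes layer_riesz: "\<forall>n\<in>{1..N}. riesz_basis_exp (A_ge N S n) (Lam n)"
begin

text \<open>Downward induction over the layers: the \<open>j\<close>-th layer is controlled by the norm on
  \<open>S\<close> and the layers above it, which are already controlled.\<close>
lemma upper_layers_energy_bound:
  assumes "i \<le> N"
  shows "\<exists>D\<ge>0. \<forall>F a. finite F \<longrightarrow> F \<subseteq> Lambda \<longrightarrow>
    (\<Sum>j\<in>{N - i<..N}. \<Sum>l\<in>F \<inter> layer j. (cmod (a l))\<^sup>2) \<le> D * L2_norm_sq S (trig_poly F a)"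
  using assms
proof (induction i)
  case 0
  then show ?case by auto
next
  case (Suc i)
  let ?E = "\<lambda>F a j. \<Sum>l\<in>F \<inter> layer j. (cmod (a l))\<^sup>2"
  obtain D where D: "D \<ge> 0" "\<And>F a. finite F \<Longrightarrow> F \<subseteq> Lambda \<Longrightarrow>
      (\<Sum>j\<in>{N - i<..N}. ?E F a j) \<le> D * L2_norm_sq S (trig_poly F a)"
    using Suc by auto
  define j where "j = N - i"
  have j: "j \<in> {1..N}" using Suc.prems by (auto simp: j_def)
  obtain c where c: "c > 0" and lower: "\<And>G b. finite G \<Longrightarrow> G \<subseteq> Lam j \<Longrightarrow>
      c * (\<Sum>l\<in>G. (cmod (b l))\<^sup>2) \<le> L2_norm_sq (A_ge N S j) (trig_poly G b)"
    using riesz_basis_exp_lower layer_riesz j by blast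
  define K where "K = 2 * inv_bound\<^sup>2 * (real N)\<^sup>2"
  have K: "K \<ge> 0" by (simp add: K_def)
  define D' where "D' = D + K * (1 + D) / c"
  show ?case
  proof (intro exI[of _ D'] conjI allI impI)
    show "D' \<ge> 0" using D(1) K c by (simp add: D'_def)
    fix F a assume F: "finite F" "F \<subseteq> Lambda"
    have "c * ?E F a j \<le> L2_norm_sq (A_ge N S j) (trig_poly (F \<inter> layer j) a)"
      by (rule layer_lower_bound[OF F(1) j lower])
    also have "\<dots> \<le> K * (L2_norm_sq S (trig_poly F a) + (\<Sum>j'\<in>{N - i<..N}. ?E F a j'))"
      using integral_layer_part_le[OF F j] by (simp add: K_def j_def)
    also have "\<dots> \<le> K * ((1 + D) * L2_norm_sq S (trig_poly F a))"
      using D(2)[OF F] K by (intro mult_left_mono) (auto simp: algebra_simps)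
    finally have "?E F a j \<le> K * (1 + D) / c * L2_norm_sq S (trig_poly F a)"
      using c by (simp add: field_simps)
    moreover have "{N - Suc i<..N} = insert j {N - i<..N}" using Suc.prems by (auto simp: j_def)
    then have "(\<Sum>j\<in>{N - Suc i<..N}. ?E F a j) = ?E F a j + (\<Sum>j\<in>{N - i<..N}. ?E F a j)"
      by (simp add: j_def)
    ultimately show "(\<Sum>j\<in>{N - Suc i<..N}. ?E F a j) \<le> D' * L2_norm_sq S (trig_poly F a)"
      using D(2)[OF F, of a] unfolding D'_def distrib_right by linarith
  qed
qed

lemma Lambda_lower_bound:
  obtains c where "c > 0"
    "\<And>F a. finite F \<Longrightarrow> F \<subseteq> Lambda \<Longrightarrow> c * (\<Sum>l\<in>F. (cmod (a l))\<^sup>2) \<le> L2_norm_sq S (trig_poly F a)"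
proof -
  obtain D where D: "D \<ge> 0" "\<And>F a. finite F \<Longrightarrow> F \<subseteq> Lambda \<Longrightarrow>
      (\<Sum>j\<in>{0<..N}. \<Sum>l\<in>F \<inter> layer j. (cmod (a l))\<^sup>2) \<le> D * L2_norm_sq S (trig_poly F a)"
    using upper_layers_energy_bound[of N] by auto
  have "{0<..N} = {1..N}" by auto
  then have "(\<Sum>l\<in>F. (cmod (a l))\<^sup>2) \<le> (D + 1) * L2_norm_sq S (trig_poly F a)"
    if "finite F" "F \<subseteq> Lambda" for F a
    using D(2)[OF that, of a] L2_norm_sq_nonneg[of S "trig_poly F a"]
    by (simp add: sum_over_layers[OF that] algebra_simps)
  then show thesis
    using D(1) by (intro that[of "1 / (D + 1)"]) (auto simp: field_simps)
qed


lemma approx_layer_coeff: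
  fixes \<delta> :: real
  assumes r: "finite_energy r" and n: "n \<in> {1..N}" and \<delta>: "\<delta> > 0"
  obtains G c where "finite G" "G \<subseteq> layer n"
    "(\<integral>\<^sup>+t. ennreal (indicator (A_ge N S n) t * (cmod (layer_coeff r t n - trig_poly G c t))\<^sup>2) \<partial>lebesgue) \<le> ennreal \<delta>"
proof -
  have [measurable]: "r \<in> borel_measurable lebesgue" using r by (simp add: finite_energy_def)
  text \<open>Demodulate the \<open>n\<close>-th coefficient so that it can be approximated with frequencies in \<open>Lam n\<close>.\<close>
  define T where "T t = expo (- real n) t * layer_coeff r t n" for t
  have T_meas [measurable]: "T \<in> borel_measurable lebesgue" unfolding T_def[abs_def] by measurable
  have T_fin: "(\<integral>\<^sup>+t. ennreal (indicator (A_ge N S n) t * (cmod (T t))\<^sup>2) \<partial>lebesgue) < \<infinity>"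
  proof -
    have "(\<integral>\<^sup>+t. ennreal (indicator (A_ge N S n) t * (cmod (T t))\<^sup>2) \<partial>lebesgue)
        \<le> ennreal (inv_bound\<^sup>2 * N) * (N * (\<integral>\<^sup>+x. ennreal (indicator S x * (cmod (r x))\<^sup>2) \<partial>lebesgue))"
      using nn_integral_layer_coeff_le[of r n] n by (simp add: T_def norm_mult)
    also have "\<dots> < \<infinity>" using r by (simp add: finite_energy_def ennreal_mult_less_top of_nat_less_top)
    finally show ?thesis .
  qed
  have "riesz_basis_exp (A_ge N S n) (Lam n)" using layer_riesz n by blast
  from riesz_basis_exp_dense[OF this nn_integral_eq_L2_norm_sq(2)[OF sets_A_ge T_meas T_fin] \<delta>]
  obtain F b where F: "finite F" "F \<subseteq> Lam n"
    and approx: "L2_norm_sq (A_ge N S n) (\<lambda>t. T t - trig_poly F b t) < \<delta>"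
    by blast
  define G where "G = (\<lambda>x. x + real n) ` F"
  define c where "c l = b (l - real n)" for l
  have "trig_poly G c t = expo (real n) t * trig_poly F b t" for t
    unfolding G_def by (subst sum.reindex) (auto simp: inj_on_def c_def expo_add_freq sum_distrib_left mult_ac)
  moreover have "layer_coeff r t n = expo (real n) t * T t" for t
    by (simp add: T_def mult.assoc[symmetric] expo_add_freq[symmetric])
  ultimately have "cmod (layer_coeff r t n - trig_poly G c t) = cmod (T t - trig_poly F b t)" for t
    by (simp add: norm_mult flip: right_diff_distrib)
  moreover have "(\<integral>\<^sup>+t. ennreal (indicator (A_ge N S n) t * (cmod (T t - trig_poly F b t))\<^sup>2) \<partial>lebesgue)
      = ennreal (L2_norm_sq (A_ge N S n) (\<lambda>t. T t - trig_poly F b t))"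
    using nn_integral_diff_trig_poly_finite[OF sets_A_ge A_ge_subset T_meas T_fin]
    by (intro nn_integral_eq_L2_norm_sq(1)) auto
  ultimately show thesis
    using approx F by (intro that[of G c]) (auto simp: G_def layer_def ennreal_leI)
qed

text \<open>Layer by layer, from the bottom: subtracting a trigonometric polynomial from the \<open>n\<close>-th
  layer changes only the \<open>n\<close>-th coefficient on the fibres where the higher coefficients live.\<close>
lemma layer_errors_small:
  fixes \<delta> :: real
  assumes \<delta>: "\<delta> > 0"
  shows "n \<le> N \<Longrightarrow> finite_energy r \<Longrightarrow> \<exists>F a. finite F \<and> F \<subseteq> (\<Union>j\<in>{1..n}. layer j)
     \<and> layer_error n (\<lambda>t. r t - trig_poly F a t) \<le> ennreal (real n * \<delta>)
     \<and> (\<forall>t j. n < j \<longrightarrow> j \<le> card (fiber t) \<longrightarrow>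
          layer_coeff (\<lambda>t. r t - trig_poly F a t) t j = layer_coeff r t j)"
proof (induction n arbitrary: r)
  case 0
  show ?case by (intro exI[of _ "{}"]) (auto simp: layer_error_def)
next
  case (Suc n)
  have n1: "Suc n \<in> {1..N}" using Suc.prems by simp
  obtain G c where G: "finite G" "G \<subseteq> layer (Suc n)" and err_G:
    "(\<integral>\<^sup>+t. ennreal (indicator (A_ge N S (Suc n)) t * (cmod (layer_coeff r t (Suc n) - trig_poly G c t))\<^sup>2)
       \<partial>lebesgue) \<le> ennreal \<delta>"
    using approx_layer_coeff[OF Suc.prems(2) n1 \<delta>] by blast
  define r' where "r' t = r t - trig_poly G c t" for t
  have "finite_energy r'" unfolding r'_def by (rule finite_energy_diff_trig_poly[OF Suc.prems(2)])
  moreover have "n \<le> N" using Suc.prems(1) by simp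
  ultimately obtain F' a' where F': "finite F'" "F' \<subseteq> (\<Union>j\<in>{1..n}. layer j)"
    and err': "layer_error n (\<lambda>t. r' t - trig_poly F' a' t) \<le> ennreal (real n * \<delta>)"
    and keep': "\<And>t j. n < j \<Longrightarrow> j \<le> card (fiber t) \<Longrightarrow>
      layer_coeff (\<lambda>t. r' t - trig_poly F' a' t) t j = layer_coeff r' t j"
    using Suc.IH[of r'] by blast
  have "layer (Suc n) \<inter> layer j = {}" if "j \<in> {1..n}" for j
    using that Suc.prems(1) by (intro layers_disjoint) auto
  then have "G \<inter> F' = {}" using G(2) F'(2) by blast
  define F where "F = G \<union> F'"
  define a where "a l = (if l \<in> G then c l else a' l)" for l
  define \<rho> where "\<rho> t = r t - trig_poly F a t" for t
  have \<rho>: "\<rho> = (\<lambda>t. r' t - trig_poly F' a' t)"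
  proof
    fix t
    show "\<rho> t = r' t - trig_poly F' a' t"
      using trig_poly_union[OF G(1) F'(1) \<open>G \<inter> F' = {}\<close>, of c a' t]
      by (simp add: \<rho>_def r'_def F_def a_def)
  qed
  have coeff_r': "layer_coeff r' t j = layer_coeff r t j - (if j = Suc n then trig_poly G c t else 0)"
    if "Suc n \<le> j" "j \<le> card (fiber t)" for t j
    unfolding r'_def using that G(2) by (intro layer_coeff_sub_layer_poly) auto
  have coeff_top: "layer_coeff \<rho> t (Suc n) = layer_coeff r t (Suc n) - trig_poly G c t"
    if "t \<in> A_ge N S (Suc n)" for t
    using that by (simp add: \<rho> keep' coeff_r' mem_A_ge_iff)
  have "layer_error (Suc n) \<rho> = layer_error n \<rho>
      + (\<integral>\<^sup>+t. ennreal (indicator (A_ge N S (Suc n)) t * (cmod (layer_coeff \<rho> t (Suc n)))\<^sup>2) \<partial>lebesgue)"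
    by (simp add: layer_error_def add.commute)
  also have "(\<integral>\<^sup>+t. ennreal (indicator (A_ge N S (Suc n)) t * (cmod (layer_coeff \<rho> t (Suc n)))\<^sup>2) \<partial>lebesgue)
      = (\<integral>\<^sup>+t. ennreal (indicator (A_ge N S (Suc n)) t
          * (cmod (layer_coeff r t (Suc n) - trig_poly G c t))\<^sup>2) \<partial>lebesgue)"
    by (intro nn_integral_cong) (simp add: indicator_def coeff_top)
  also have "layer_error n \<rho> + \<dots> \<le> ennreal (real n * \<delta>) + ennreal \<delta>"
    using err' err_G unfolding \<rho> by (rule add_mono)
  also have "\<dots> = ennreal (real (Suc n) * \<delta>)"
    using \<delta> by (simp add: ennreal_plus[symmetric] algebra_simps del: ennreal_plus)
  finally have "layer_error (Suc n) \<rho> \<le> ennreal (real (Suc n) * \<delta>)" .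
  moreover have "F \<subseteq> (\<Union>j\<in>{1..Suc n}. layer j)"
    using G(2) F'(2) by (auto simp: F_def atLeastAtMostSuc_conv)
  moreover have "layer_coeff \<rho> t j = layer_coeff r t j" if "Suc n < j" "j \<le> card (fiber t)" for t j
    using that by (simp add: \<rho> keep' coeff_r')
  ultimately show ?case
    using G(1) F'(1) by (intro exI[of _ F] exI[of _ a]) (auto simp: F_def \<rho>_def[abs_def])
qed

lemma Lambda_dense:
  assumes f: "in_L2 S f" and \<epsilon>: "\<epsilon> > 0"
  shows "\<exists>F a. finite F \<and> F \<subseteq> Lambda \<and> L2_norm_sq S (\<lambda>t. f t - trig_poly F a t) < \<epsilon>"
proof -
  define g where "g t = indicator S t *\<^sub>R f t" for t
  have g_sq: "indicator S x * (cmod (g x))\<^sup>2 = indicator S x * (cmod (f x))\<^sup>2" for x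
    by (simp add: g_def indicator_def)
  have "finite_energy g"
    using f unfolding finite_energy_def in_L2_def g_sq
    by (auto simp: g_def[abs_def] nn_integral_eq_integral)
  define \<delta> where "\<delta> = \<epsilon> / (real N ^ 3 + 1)"
  have N3: "real N ^ 3 + 1 > 0" by (intro add_nonneg_pos) auto
  then have \<delta>: "\<delta> > 0" unfolding \<delta>_def using \<epsilon> by simp
  obtain F a where F: "finite F" "F \<subseteq> (\<Union>j\<in>{1..N}. layer j)"
    and err: "layer_error N (\<lambda>t. g t - trig_poly F a t) \<le> ennreal (real N * \<delta>)"
    using layer_errors_small[OF \<delta> order.refl \<open>finite_energy g\<close>] by blast
  define \<rho> where "\<rho> t = g t - trig_poly F a t" for t
  have [measurable]: "g \<in> borel_measurable lebesgue"
    using \<open>finite_energy g\<close> by (simp add: finite_energy_def)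
  have \<rho>_meas [measurable]: "\<rho> \<in> borel_measurable lebesgue"
    unfolding \<rho>_def[abs_def] by measurable
  have "(\<integral>\<^sup>+x. ennreal (indicator S x * (cmod (\<rho> x))\<^sup>2) \<partial>lebesgue) \<le> ennreal (N * N) * layer_error N \<rho>"
    by (rule nn_integral_le_layer_error) measurable
  also have "\<dots> \<le> ennreal (N * N) * ennreal (real N * \<delta>)"
    using err by (intro mult_left_mono) (auto simp: \<rho>_def[abs_def])
  also have "\<dots> = ennreal (real N ^ 3 * \<delta>)"
    using \<delta> by (simp add: ennreal_mult[symmetric] power3_eq_cube mult_ac)
  finally have nn_bound: "(\<integral>\<^sup>+x. ennreal (indicator S x * (cmod (\<rho> x))\<^sup>2) \<partial>lebesgue)
      \<le> ennreal (real N ^ 3 * \<delta>)" .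
  have "L2_norm_sq S (\<lambda>t. f t - trig_poly F a t) = L2_norm_sq S \<rho>"
    unfolding L2_norm_sq_def by (intro Bochner_Integration.integral_cong) (auto simp: \<rho>_def g_def indicator_def)
  also have "\<dots> \<le> real N ^ 3 * \<delta>"
    unfolding L2_norm_sq_def using nn_bound \<delta>
    by (subst integral_eq_nn_integral) (auto intro!: enn2real_leI)
  also have "\<dots> < (real N ^ 3 + 1) * \<delta>"
    using \<delta> by simp
  also have "\<dots> = \<epsilon>"
    unfolding \<delta>_def using N3 by simp
  finally have "L2_norm_sq S (\<lambda>t. f t - trig_poly F a t) < \<epsilon>" .
  moreover have "F \<subseteq> Lambda" using F(2) by (simp add: Lambda_def)
  ultimately show ?thesis using F(1) by blast
qed

lemma riesz_basis_exp_Lambda: "riesz_basis_exp S Lambda"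
proof (rule Lambda_lower_bound)
  fix c assume "c > 0" "\<And>F a. finite F \<Longrightarrow> F \<subseteq> Lambda \<Longrightarrow>
      c * (\<Sum>l\<in>F. (cmod (a l))\<^sup>2) \<le> L2_norm_sq S (trig_poly F a)"
  then show ?thesis
    using Lambda_dense Lambda_upper_bound by (intro riesz_basis_expI[where C=1]) auto
qed

end

theorem mainTheorem2:
  fixes N :: nat and S :: "real set" and Lam :: "nat \<Rightarrow> real set"
  assumes "N > 0"
    and "S \<in> sets lebesgue" and "S \<subseteq> {0..1}"
    and "\<forall>n\<in>{1..N}. Lam n \<subseteq> {real_of_int (int N * k) | k. True}"
    and "\<forall>n\<in>{1..N}. riesz_basis_exp (A_ge N S n) (Lam n)"
  shows "riesz_basis_exp S (\<Union>j\<in>{1..N}. (\<lambda>x. x + real j) ` Lam j)"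
proof -
  interpret riesz_layers N S Lam using assms by unfold_locales
  show ?thesis using riesz_basis_exp_Lambda by (simp add: Lambda_def layer_def)
qed

end
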